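(* Fix $n$ and let $1\leq k\leq n-1$. Then $$H_{k,k}(\mathbf{x})=C_k\,e_{k+1}(\mathbf{x})\prod_{S\subseteq[n],\ |S|\leq k-1}\left(\partial^S e_k(\mathbf{x})\right)^{|S|!\,(n-|S|-1)},$$ where $C_k$ is a positive constant and $\partial^S=\prod_{j\in S}\partial/\partial x_j$.
   Context: Variables $\mathbf{x}=(x_1,\ldots,x_n)$; $[n]=\{1,\ldots,n\}$. For nonempty $S\subseteq[n]$, $e_k(S)=\sum_{T\subseteq S,|T|=k}\prod_{j\in T}x_j$ (with $e_0(S)=1$), $e_k(\mathbf{x})=e_k([n])$, and for $k\geq1$, $q_k(S)=e_k(S)/e_{k-1}(S)$. For $S\subseteq[n]$ write $S'=[n]\setminus S$. For a finite connected multigraph $G=(V,E)$ with a variable $x_e$ per edge, the spanning tree polynomial is $T_G=\sum_T\prod_{e\in T}x_e$, summed over all spanning trees $T$ of $G$. Graph $G_{n,k}$, $n\geq k\geq 1$: vertices $s$, $z$, and all words $w=w_1\cdots w_\ell$ with $1\leq\ell\leq k$, $w_i\in[n]$, and $w_i\neq w_j$ for $i\neq j$; edges: (1) $s$ to $i$ for each $1\leq i\leq n$; (2) $w_1\cdots w_{i-1}$ to $w_1\cdots w_{i-1}w_i$ for all $2\leq i\leq k$; (3) $w_1\cdots w_k$ to $z$ for every word of length $k$. For $r\geq k$, $H_{k,r}(\mathbf{x})$ is obtained from $T_{G_{n,k}}$ by setting the edge variables to: (a) $r!\,x_i$ for the edge $s$–$i$; (b) $(r-i+1)!\,x_{w_i}$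 for the edge $w_1\cdots w_{i-1}$–$w_1\cdots w_i$; (c) $(r-k+1)!\,q_{r-k+1}(\{w_1,\ldots,w_k\}')$ for the edge $w_1\cdots w_k$–$z$. In particular $H_{k,k}$ uses $r=k$. *)

theory Defs
  imports "HOL-Analysis.Analysis"
begin

definition esym :: "(nat \<Rightarrow> real) \<Rightarrow> nat \<Rightarrow> nat set \<Rightarrow> real" where
  "esym x k S = (\<Sum>T\<in>{T. T \<subseteq> S \<and> card T = k}. \<Prod>j\<in>T. x j)"

definition qsym :: "(nat \<Rightarrow> real) \<Rightarrow> nat \<Rightarrow> nat set \<Rightarrow> real" where
  "qsym x k S = esym x k S / esym x (k - 1) S"

definition partial :: "nat \<Rightarrow> ((nat \<Rightarrow> real) \<Rightarrow> real) \<Rightarrow> (nat \<Rightarrow> real) \<Rightarrow> real" where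
  "partial j f = (\<lambda>x. deriv (\<lambda>t. f (x(j := t))) (x j))"

definition partials :: "nat set \<Rightarrow> ((nat \<Rightarrow> real) \<Rightarrow> real) \<Rightarrow> (nat \<Rightarrow> real) \<Rightarrow> real" where
  "partials S f = foldr partial (sorted_list_of_set S) f"

text \<open>Spanning trees of a graph with vertex set V and edge set E (edges stored as
  oriented pairs, each undirected edge exactly once), and the spanning tree polynomial.\<close>
definition spanning_trees :: "'v set \<Rightarrow> ('v \<times> 'v) set \<Rightarrow> ('v \<times> 'v) set set" where
  "spanning_trees V E = {T. T \<subseteq> E \<and> card T = card V - 1 \<and>
      (\<forall>u\<in>V. \<forall>v\<in>V. (u, v) \<in> (T \<union> T\<inverse>)\<^sup>*)}"

definition tree_poly :: "'v set \<Rightarrow> ('v \<times> 'v) set \<Rightarrow> ('v \<Rightarrow> 'v \<Rightarrow> real) \<Rightarrow> real" where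
  "tree_poly V E w = (\<Sum>T\<in>spanning_trees V E. \<Prod>(u, v)\<in>T. w u v)"

datatype vtx = Sv | Zv | W "nat list"

definition words :: "nat \<Rightarrow> nat \<Rightarrow> nat list set" where
  "words n k = {w. distinct w \<and> 1 \<le> length w \<and> length w \<le> k \<and> set w \<subseteq> {1..n}}"

definition Gverts :: "nat \<Rightarrow> nat \<Rightarrow> vtx set" where
  "Gverts n k = {Sv, Zv} \<union> W ` words n k"

definition Gedges :: "nat \<Rightarrow> nat \<Rightarrow> (vtx \<times> vtx) set" where
  "Gedges n k =
     {(Sv, W [i]) | i. i \<in> {1..n}}
   \<union> {(W w, W (w @ [a])) | w a. w \<noteq> [] \<and> w @ [a] \<in> words n k}
   \<union> {(W w, Zv) | w. w \<in> words n k \<and> length w = k}"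

text \<open>Edge weights for H_{k,r}; an edge (u,v) is oriented from the shorter to the longer word.\<close>
definition Hwt :: "nat \<Rightarrow> nat \<Rightarrow> nat \<Rightarrow> (nat \<Rightarrow> real) \<Rightarrow> vtx \<Rightarrow> vtx \<Rightarrow> real" where
  "Hwt n k r x u v =
     (case (u, v) of
        (Sv, W [i]) \<Rightarrow> fact r * x i
      | (W w, W w') \<Rightarrow>
          (if w' \<noteq> [] \<and> butlast w' = w then fact (r - length w' + 1) * x (last w') else 0)
      | (W w, Zv) \<Rightarrow> fact (r - k + 1) * qsym x (r - k + 1) ({1..n} - set w)
      | _ \<Rightarrow> 0)"

definition H :: "nat \<Rightarrow> nat \<Rightarrow> nat \<Rightarrow> (nat \<Rightarrow> real) \<Rightarrow> real" where
  "H n k r x = tree_poly (Gverts n k) (Gedges n k) (Hwt n k r x)"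

end

theory Submission
  imports Defs
begin

text \<open>
  For a prefix word u, the subgraph of G_{n,k} below u, with terminals u and z, is the parallel
  composition, over the letters a not in u, of the edge u--ua in series with the subgraph below ua.
  Spanning-tree polynomials T and polynomials F of two-tree forests separating the terminals obey
  T = T1 T2, F = T1 F2 + F1 T2 under series and T = T1 F2 + F1 T2, F = F1 F2 under parallel
  composition.  With the weights of H_{k,k}, induction on d = k - |u| gives F = e_d(C) Psi_d(C)
  and T = (d+1)! e_{d+1}(C) Psi_d(C) for C = [n] - u, where Psi_0 = 1 and
  Psi_{d+1}(C) = (d+1)!^|C| e_{d+1}(C)^(|C|-1) prod_{a in C} Psi_d(C - a);
  the step uses e_{d+1}(C) = x_a e_d(C - a) + e_{d+1}(C - a) and
  sum_{a in C} x_a e_d(C - a) = (d+1) e_{d+1}(C).  Unfolding the recursion, Psi_k([n]) is a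
  positive constant times prod_{|S| < k} e_{k-|S|}([n] - S)^(|S|! (n-|S|-1)), and
  e_{k-|S|}([n] - S) is the derivative of e_k with respect to the variables in S.
\<close>

section \<open>Connectivity, spanning trees and two-tree forests\<close>

abbreviation conn :: "('v \<times> 'v) set \<Rightarrow> ('v \<times> 'v) set" where
  "conn T \<equiv> (T \<union> T\<inverse>)\<^sup>*"

lemma conn_sym: "(x, y) \<in> conn T \<Longrightarrow> (y, x) \<in> conn T"
proof -
  assume "(x, y) \<in> conn T"
  then have "(y, x) \<in> ((T \<union> T\<inverse>)\<inverse>)\<^sup>*" by (simp add: rtrancl_converse)
  moreover have "(T \<union> T\<inverse>)\<inverse> = T \<union> T\<inverse>" by auto
  ultimately show ?thesis by simp
qed

lemma conn_mono: "T \<subseteq> T' \<Longrightarrow> (x, y) \<in> conn T \<Longrightarrow> (x, y) \<in> conn T'"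
proof -
  assume "T \<subseteq> T'" "(x, y) \<in> conn T"
  moreover have "T \<union> T\<inverse> \<subseteq> T' \<union> T'\<inverse>" using \<open>T \<subseteq> T'\<close> by auto
  ultimately show ?thesis using rtrancl_mono by blast
qed

lemma conn_into_conn: "(x, y) \<in> conn T \<Longrightarrow> (y, z) \<in> T \<or> (z, y) \<in> T \<Longrightarrow> (x, z) \<in> conn T"
  by (meson UnI1 UnI2 converse_iff rtrancl_into_rtrancl)

lemma conn_closed:
  assumes "(x, y) \<in> conn T" "x \<in> V" "T \<subseteq> V \<times> V"
  shows "y \<in> V"
  using assms(1) by (induction rule: rtrancl_induct) (use assms in auto)

text \<open>Every vertex outside R is sent to the first edge of a shortest path into R; this map
  is injective, so a set of edges connecting every vertex to R has at least card (V - R) edges.\<close>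
lemma card_Diff_le_if_conn:
  assumes fin: "finite T" and cov: "\<forall>x\<in>V. \<exists>r\<in>R. (x, r) \<in> conn T"
  shows "card (V - R) \<le> card T"
proof -
  define S where "S = T \<union> T\<inverse>"
  define d where "d = (\<lambda>x. LEAST n. \<exists>r\<in>R. (x, r) \<in> S ^^ n)"
  have "\<exists>e. e \<in> T \<and> (\<exists>y. (e = (x, y) \<or> e = (y, x)) \<and> d y < d x)" if x: "x \<in> V - R" for x
  proof -
    have "\<exists>n. \<exists>r\<in>R. (x, r) \<in> S ^^ n"
      using cov x unfolding S_def by (meson DiffD1 rtrancl_power)
    then obtain r where r: "r \<in> R" "(x, r) \<in> S ^^ d x"
      unfolding d_def using LeastI_ex[of "\<lambda>n. \<exists>r\<in>R. (x, r) \<in> S ^^ n"] by blast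
    have "d x \<noteq> 0"
    proof
      assume "d x = 0"
      with r have "x = r" by simp
      with x r show False by auto
    qed
    then obtain p where p: "d x = Suc p" by (cases "d x") auto
    then obtain y where y: "(x, y) \<in> S" "(y, r) \<in> S ^^ p" using r relpow_Suc_D2 by metis
    have "d y \<le> p" unfolding d_def using y r by (intro Least_le) blast
    moreover have "(x, y) \<in> T \<or> (y, x) \<in> T" using y unfolding S_def by auto
    ultimately show ?thesis using p by (metis less_Suc_eq_le)
  qed
  then obtain f where f: "\<And>x. x \<in> V - R \<Longrightarrow> f x \<in> T \<and> (\<exists>y. (f x = (x, y) \<or> f x = (y, x)) \<and> d y < d x)"
    by metis
  have "inj_on f (V - R)"
  proof (rule inj_onI, rule ccontr)
    fix x x' assume xx': "x \<in> V - R" "x' \<in> V - R" "f x = f x'" "x \<noteq> x'"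
    obtain y where y: "f x = (x, y) \<or> f x = (y, x)" "d y < d x" using f[OF xx'(1)] by blast
    obtain y' where y': "f x' = (x', y') \<or> f x' = (y', x')" "d y' < d x'" using f[OF xx'(2)] by blast
    show False using y y' xx'(3,4) by auto
  qed
  moreover have "f ` (V - R) \<subseteq> T" using f by blast
  ultimately show ?thesis using card_inj_on_le fin by blast
qed

lemma card_le_Suc_if_conn:
  assumes "finite V" "finite T" "a \<in> V" "\<forall>x\<in>V. (x, a) \<in> conn T"
  shows "card V \<le> card T + 1"
proof -
  have "card (V - {a}) \<le> card T" using card_Diff_le_if_conn[of T V "{a}"] assms by auto
  then show ?thesis using assms by (simp add: card_Diff_singleton)
qed

lemma card_le_add2_if_conn:
  assumes "finite V" "finite T" "a \<in> V" "b \<in> V" "\<forall>x\<in>V. (x, a) \<in> conn T \<or> (x, b) \<in> conn T"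
  shows "card V \<le> card T + 2"
proof -
  have "card (V - {a, b}) \<le> card T" using card_Diff_le_if_conn[of T V "{a, b}"] assms by auto
  moreover have "card (V - {a, b}) = card V - card {a, b}"
    using assms by (intro card_Diff_subset) auto
  moreover have "card {a, b} \<le> 2" by (simp add: card_insert_le_m1)
  ultimately show ?thesis by linarith
qed

lemma conn_through_cut:
  assumes "(x, y) \<in> conn T" "x \<in> V1" "T \<subseteq> E1 \<union> E2" "E1 \<subseteq> V1 \<times> V1" "E2 \<subseteq> V2 \<times> V2"
    "V1 \<inter> V2 \<subseteq> C"
  shows "(y \<in> V1 \<and> (x, y) \<in> conn (T \<inter> E1)) \<or> (\<exists>c\<in>C. (x, c) \<in> conn (T \<inter> E1))"
  using assms(1)
proof (induction rule: rtrancl_induct)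
  case base
  then show ?case using assms by auto
next
  case (step y z)
  show ?case
  proof (cases "\<exists>c\<in>C. (x, c) \<in> conn (T \<inter> E1)")
    case False
    with step.IH have y: "y \<in> V1" "(x, y) \<in> conn (T \<inter> E1)" by auto
    then have "y \<notin> V2" using False assms(6) by blast
    moreover have "(y, z) \<in> T \<or> (z, y) \<in> T" using step.hyps(2) by auto
    ultimately have yz: "(y, z) \<in> T \<inter> E1 \<or> (z, y) \<in> T \<inter> E1" using assms(3,5) by blast
    then have "z \<in> V1" using assms(4) by auto
    moreover have "(x, z) \<in> conn (T \<inter> E1)" using conn_into_conn[OF y(2) yz] .
    ultimately show ?thesis by blast
  qed blast
qed

lemma spanning_trees_iff:
  "T \<in> spanning_trees V E \<longleftrightarrow> T \<subseteq> E \<and> card T = card V - 1 \<and> (\<forall>u\<in>V. \<forall>v\<in>V. (u, v) \<in> conn T)"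
  unfolding spanning_trees_def by (rule mem_Collect_eq)

lemma spanning_treesI:
  assumes "T \<subseteq> E" "card T = card V - 1" "\<forall>x\<in>V. (x, a) \<in> conn T"
  shows "T \<in> spanning_trees V E"
proof -
  have "\<forall>u\<in>V. \<forall>v\<in>V. (u, v) \<in> conn T"
    using assms(3) by (meson conn_sym rtrancl_trans)
  then show ?thesis using assms(1,2) unfolding spanning_trees_iff by blast
qed

lemma spanning_trees_conn: "T \<in> spanning_trees V E \<Longrightarrow> u \<in> V \<Longrightarrow> v \<in> V \<Longrightarrow> (u, v) \<in> conn T"
  unfolding spanning_trees_iff by blast

lemma spanning_trees_card: "T \<in> spanning_trees V E \<Longrightarrow> card T = card V - 1"
  unfolding spanning_trees_iff by (elim conjE)

lemma spanning_trees_subset: "spanning_trees V E \<subseteq> Pow E"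
  unfolding spanning_trees_def by auto

text \<open>Spanning forests of two trees separating a from b: with card V - 2 edges and every vertex
  joined to a or b, there are exactly two components.\<close>
definition two_forests :: "'v set \<Rightarrow> ('v \<times> 'v) set \<Rightarrow> 'v \<Rightarrow> 'v \<Rightarrow> ('v \<times> 'v) set set" where
  "two_forests V E a b = {T. T \<subseteq> E \<and> card T = card V - 2 \<and>
      (\<forall>x\<in>V. (x, a) \<in> conn T \<or> (x, b) \<in> conn T) \<and> (a, b) \<notin> conn T}"

definition forest_poly :: "'v set \<Rightarrow> ('v \<times> 'v) set \<Rightarrow> 'v \<Rightarrow> 'v \<Rightarrow> ('v \<Rightarrow> 'v \<Rightarrow> real) \<Rightarrow> real" where
  "forest_poly V E a b w = (\<Sum>T\<in>two_forests V E a b. \<Prod>(u, v)\<in>T. w u v)"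

lemma two_forests_iff:
  "T \<in> two_forests V E a b \<longleftrightarrow> T \<subseteq> E \<and> card T = card V - 2 \<and>
      (\<forall>x\<in>V. (x, a) \<in> conn T \<or> (x, b) \<in> conn T) \<and> (a, b) \<notin> conn T"
  unfolding two_forests_def by (rule mem_Collect_eq)

lemma two_forests_card: "T \<in> two_forests V E a b \<Longrightarrow> card T = card V - 2"
  unfolding two_forests_iff by (elim conjE)

lemma two_forests_subset: "two_forests V E a b \<subseteq> Pow E"
  unfolding two_forests_def by auto

lemma two_forests_conn:
  "T \<in> two_forests V E a b \<Longrightarrow> x \<in> V \<Longrightarrow> (x, a) \<in> conn T \<or> (x, b) \<in> conn T"
  unfolding two_forests_iff by blast

lemma two_forests_not_conn: "T \<in> two_forests V E a b \<Longrightarrow> (a, b) \<notin> conn T"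
  unfolding two_forests_iff by blast

lemma spanning_trees_Int_two_forests:
  assumes "2 \<le> card V"
  shows "spanning_trees V E \<inter> two_forests V E' a b = {}"
proof (rule equals0I)
  fix T assume T: "T \<in> spanning_trees V E \<inter> two_forests V E' a b"
  then have "card T = card V - 1" "card T = card V - 2"
    using spanning_trees_card[of T V E] two_forests_card[of T V E' a b] by auto
  then show False using assms by linarith
qed

lemma tree_poly_edge: "a \<noteq> b \<Longrightarrow> tree_poly {a, b} {(a, b)} w = w a b"
proof -
  assume ab: "a \<noteq> b"
  have "spanning_trees {a, b} {(a, b)} = {{(a, b)}}"
  proof (intro equalityI subsetI)
    fix T assume T: "T \<in> spanning_trees {a, b} {(a, b)}"
    then have "T \<subseteq> {(a, b)}" using spanning_trees_subset by blast
    then show "T \<in> {{(a, b)}}" using spanning_trees_card[OF T] ab by (auto simp: subset_singleton_iff)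
  next
    have "(b, a) \<in> conn {(a, b)}" by blast
    then show "T \<in> spanning_trees {a, b} {(a, b)}" if "T \<in> {{(a, b)}}" for T
      using that ab by (auto intro!: spanning_treesI[where a = a])
  qed
  then show ?thesis unfolding tree_poly_def by simp
qed

lemma empty_in_two_forests: "a \<noteq> b \<Longrightarrow> {} \<in> two_forests {a, b} E a b"
  unfolding two_forests_iff by simp

lemma forest_poly_edge: "a \<noteq> b \<Longrightarrow> forest_poly {a, b} {(a, b)} a b w = 1"
proof -
  assume ab: "a \<noteq> b"
  have "two_forests {a, b} {(a, b)} a b = {{}}"
  proof (intro equalityI subsetI)
    fix T assume T: "T \<in> two_forests {a, b} {(a, b)} a b"
    then have "T \<subseteq> {(a, b)}" using two_forests_subset[of "{a, b}" "{(a, b)}" a b] by auto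
    moreover have "card T = 0" using two_forests_card[OF T] ab by simp
    ultimately show "T \<in> {{}}" using finite_subset by fastforce
  qed (use empty_in_two_forests[OF ab] in blast)
  then show ?thesis unfolding forest_poly_def by simp
qed

lemma tree_poly_no_edges: "a \<noteq> b \<Longrightarrow> tree_poly {a, b} {} w = 0"
proof -
  assume ab: "a \<noteq> b"
  have "spanning_trees {a, b} {} = {}"
  proof (rule equals0I)
    fix T assume T: "T \<in> spanning_trees {a, b} {}"
    then have "T = {}" using spanning_trees_subset[of "{a, b}" "{}"] by auto
    moreover have "card T = 1" using spanning_trees_card[OF T] ab by simp
    ultimately show False by simp
  qed
  then show ?thesis unfolding tree_poly_def by simp
qed

lemma forest_poly_no_edges: "a \<noteq> b \<Longrightarrow> forest_poly {a, b} {} a b w = 1"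
proof -
  assume ab: "a \<noteq> b"
  have "T = {}" if "T \<in> two_forests {a, b} {} a b" for T
    using that two_forests_subset[of "{a, b}" "{}" a b] by auto
  then have "two_forests {a, b} {} a b = {{}}" using empty_in_two_forests[OF ab] by blast
  then show ?thesis unfolding forest_poly_def by simp
qed

section \<open>Series and parallel composition\<close>

lemma two_forests_commute: "two_forests V E a b = two_forests V E b a"
  unfolding two_forests_def by (auto dest: conn_sym)

lemma sum_prod_Int_split:
  fixes f :: "'e \<Rightarrow> 'a::comm_semiring_1"
  assumes "finite E1" "finite E2" "E1 \<inter> E2 = {}" "A \<subseteq> Pow E1" "B \<subseteq> Pow E2"
  shows "(\<Sum>T\<in>{T. T \<subseteq> E1 \<union> E2 \<and> T \<inter> E1 \<in> A \<and> T \<inter> E2 \<in> B}. prod f T) =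
     (\<Sum>T\<in>A. prod f T) * (\<Sum>T\<in>B. prod f T)"
proof -
  have eq: "{T. T \<subseteq> E1 \<union> E2 \<and> T \<inter> E1 \<in> A \<and> T \<inter> E2 \<in> B} = (\<lambda>(X, Y). X \<union> Y) ` (A \<times> B)"
  proof (intro equalityI subsetI)
    fix T assume "T \<in> {T. T \<subseteq> E1 \<union> E2 \<and> T \<inter> E1 \<in> A \<and> T \<inter> E2 \<in> B}"
    then have "T = (T \<inter> E1) \<union> (T \<inter> E2)" "(T \<inter> E1, T \<inter> E2) \<in> A \<times> B" by auto
    then show "T \<in> (\<lambda>(X, Y). X \<union> Y) ` (A \<times> B)" by (metis (no_types, lifting) case_prod_conv image_eqI)
  next
    fix T assume "T \<in> (\<lambda>(X, Y). X \<union> Y) ` (A \<times> B)"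
    then obtain X Y where "X \<in> A" "Y \<in> B" "T = X \<union> Y" by auto
    moreover have "X \<subseteq> E1" "Y \<subseteq> E2" using calculation assms by auto
    moreover have "T \<inter> E1 = X" "T \<inter> E2 = Y" using calculation assms(3) by auto
    ultimately show "T \<in> {T. T \<subseteq> E1 \<union> E2 \<and> T \<inter> E1 \<in> A \<and> T \<inter> E2 \<in> B}" by auto
  qed
  have inj: "inj_on (\<lambda>(X, Y). X \<union> Y) (A \<times> B)"
  proof (rule inj_onI, clarify)
    fix X Y X' Y' assume h: "X \<in> A" "Y \<in> B" "X' \<in> A" "Y' \<in> B" "X \<union> Y = X' \<union> Y'"
    then have "X \<subseteq> E1" "Y \<subseteq> E2" "X' \<subseteq> E1" "Y' \<subseteq> E2" using assms by auto
    then have "(X \<union> Y) \<inter> E1 = X" "(X' \<union> Y') \<inter> E1 = X'" "(X \<union> Y) \<inter> E2 = Y" "(X' \<union> Y') \<inter> E2 = Y'"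
      using assms(3) by auto
    then show "X = X' \<and> Y = Y'" using h(5) by metis
  qed
  have "(\<Sum>T\<in>{T. T \<subseteq> E1 \<union> E2 \<and> T \<inter> E1 \<in> A \<and> T \<inter> E2 \<in> B}. prod f T) =
        (\<Sum>(X, Y)\<in>A \<times> B. prod f (X \<union> Y))"
    unfolding eq by (subst sum.reindex[OF inj]) (simp add: case_prod_beta comp_def)
  also have "\<dots> = (\<Sum>(X, Y)\<in>A \<times> B. prod f X * prod f Y)"
  proof (rule sum.cong[OF refl], clarify)
    fix X Y assume "X \<in> A" "Y \<in> B"
    then have "X \<subseteq> E1" "Y \<subseteq> E2" using assms by auto
    then have "finite X" "finite Y" "X \<inter> Y = {}" using assms(1,2,3) by (auto intro: finite_subset)
    then show "prod f (X \<union> Y) = prod f X * prod f Y" by (simp add: prod.union_disjoint)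
  qed
  also have "\<dots> = (\<Sum>T\<in>A. prod f T) * (\<Sum>T\<in>B. prod f T)"
    by (simp add: sum.cartesian_product[symmetric] sum_product)
  finally show ?thesis .
qed

lemma sum_prod_Int_split2:
  fixes f :: "'e \<Rightarrow> 'a::comm_semiring_1"
  assumes "finite E1" "finite E2" "E1 \<inter> E2 = {}"
    "A1 \<subseteq> Pow E1" "B1 \<subseteq> Pow E2" "A2 \<subseteq> Pow E1" "B2 \<subseteq> Pow E2" "A1 \<inter> A2 = {}"
  shows "(\<Sum>T\<in>{T. T \<subseteq> E1 \<union> E2 \<and> (T \<inter> E1 \<in> A1 \<and> T \<inter> E2 \<in> B1 \<or> T \<inter> E1 \<in> A2 \<and> T \<inter> E2 \<in> B2)}. prod f T) =
     (\<Sum>T\<in>A1. prod f T) * (\<Sum>T\<in>B1. prod f T) + (\<Sum>T\<in>A2. prod f T) * (\<Sum>T\<in>B2. prod f T)"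
proof -
  define X where "X = {T. T \<subseteq> E1 \<union> E2 \<and> T \<inter> E1 \<in> A1 \<and> T \<inter> E2 \<in> B1}"
  define Y where "Y = {T. T \<subseteq> E1 \<union> E2 \<and> T \<inter> E1 \<in> A2 \<and> T \<inter> E2 \<in> B2}"
  have "{T. T \<subseteq> E1 \<union> E2 \<and> (T \<inter> E1 \<in> A1 \<and> T \<inter> E2 \<in> B1 \<or> T \<inter> E1 \<in> A2 \<and> T \<inter> E2 \<in> B2)} = X \<union> Y"
    unfolding X_def Y_def by blast
  moreover have "X \<inter> Y = {}" using assms(8) unfolding X_def Y_def by blast
  moreover have "finite X" "finite Y"
    using assms(1,2) unfolding X_def Y_def by (auto intro: finite_subset[of _ "Pow (E1 \<union> E2)"])
  ultimately show ?thesis unfolding X_def Y_def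
    by (simp add: sum.union_disjoint sum_prod_Int_split[OF assms(1-5)] sum_prod_Int_split[OF assms(1-3,6,7)])
qed

locale parallel_comp =
  fixes V1 V2 :: "'v set" and E1 E2 :: "('v \<times> 'v) set" and a b :: 'v
  assumes finite_V1: "finite V1" and finite_V2: "finite V2"
    and E1_subset: "E1 \<subseteq> V1 \<times> V1" and E2_subset: "E2 \<subseteq> V2 \<times> V2"
    and V1_Int_V2: "V1 \<inter> V2 = {a, b}" and a_neq_b: "a \<noteq> b" and E1_Int_E2: "E1 \<inter> E2 = {}"
begin

lemma swap: "parallel_comp V2 V1 E2 E1 a b"
  using finite_V1 finite_V2 E1_subset E2_subset V1_Int_V2 a_neq_b E1_Int_E2
  by unfold_locales auto

lemma finite_E1: "finite E1"
  using finite_subset[OF E1_subset] finite_V1 by blast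

lemma terminals_in_V1: "a \<in> V1" "b \<in> V1"
  using V1_Int_V2 by auto

lemma two_le_card_V1: "2 \<le> card V1"
proof -
  have "card {a, b} \<le> card V1" using terminals_in_V1 by (intro card_mono finite_V1) auto
  then show ?thesis using a_neq_b by simp
qed

lemma card_Un: "card (V1 \<union> V2) = card V1 + card V2 - 2"
proof -
  have "card (V1 \<union> V2) + card (V1 \<inter> V2) = card V1 + card V2"
    using card_Un_Int finite_V1 finite_V2 by metis
  then show ?thesis using V1_Int_V2 a_neq_b by simp
qed

lemma card_edges_split:
  assumes "T \<subseteq> E1 \<union> E2"
  shows "card T = card (T \<inter> E1) + card (T \<inter> E2)"
proof -
  have "T = (T \<inter> E1) \<union> (T \<inter> E2)" using assms by auto
  moreover have "finite (T \<inter> E1)" "finite (T \<inter> E2)"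
    using finite_E1 parallel_comp.finite_E1[OF swap] by auto
  moreover have "(T \<inter> E1) \<inter> (T \<inter> E2) = {}" using E1_Int_E2 by auto
  ultimately show ?thesis by (metis card_Un_disjoint)
qed

lemma conn_terminals1:
  assumes "T \<subseteq> E1 \<union> E2" "\<And>x. x \<in> V1 \<union> V2 \<Longrightarrow> (x, a) \<in> conn T \<or> (x, b) \<in> conn T"
    and x: "x \<in> V1"
  shows "(x, a) \<in> conn (T \<inter> E1) \<or> (x, b) \<in> conn (T \<inter> E1)"
proof -
  have "(x, a) \<in> conn (T \<inter> E1) \<or> (x, b) \<in> conn (T \<inter> E1)" if "(x, c) \<in> conn T" "c \<in> {a, b}" for c
    using conn_through_cut[OF that(1) x assms(1) E1_subset E2_subset, of "{a, b}"] V1_Int_V2 that(2)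
    by auto
  then show ?thesis using assms(2) x by blast
qed

lemma card_V1_le_restrict:
  assumes "T \<subseteq> E1 \<union> E2" "\<And>x. x \<in> V1 \<union> V2 \<Longrightarrow> (x, a) \<in> conn T \<or> (x, b) \<in> conn T"
  shows "card V1 \<le> card (T \<inter> E1) + 2"
  using card_le_add2_if_conn[OF finite_V1 _ terminals_in_V1] conn_terminals1[OF assms] finite_E1
  by simp

lemma conn_from_a_step:
  assumes "T \<subseteq> E1 \<union> E2" "y \<in> V1" "(a, y) \<in> conn (T \<inter> E1)" "(a, b) \<notin> conn (T \<inter> E1)"
    "(y, z) \<in> T \<or> (z, y) \<in> T"
  shows "(a, z) \<in> conn (T \<inter> E1) \<or> (a, z) \<in> conn (T \<inter> E2)"
proof (cases "(y, z) \<in> T \<inter> E1 \<or> (z, y) \<in> T \<inter> E1")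
  case True
  then show ?thesis using assms(3) conn_into_conn[of a y "T \<inter> E1" z] by blast
next
  case False
  then have yz: "(y, z) \<in> T \<inter> E2 \<or> (z, y) \<in> T \<inter> E2" using assms(1,5) by auto
  then have "y \<in> V2" using E2_subset by auto
  then have "y = a" using V1_Int_V2 assms(2,3,4) by auto
  then show ?thesis using yz conn_into_conn[of a a "T \<inter> E2" z] by blast
qed

text \<open>A walk starting at a can only change sides at a or b, so it reaches b within one side.\<close>
lemma not_conn_Un:
  assumes T: "T \<subseteq> E1 \<union> E2"
    and "(a, b) \<notin> conn (T \<inter> E1)" "(a, b) \<notin> conn (T \<inter> E2)"
  shows "(a, b) \<notin> conn T"
proof
  assume "(a, b) \<in> conn T"
  have "(a, y) \<in> conn (T \<inter> E1) \<or> (a, y) \<in> conn (T \<inter> E2)" if "(a, y) \<in> conn T" for y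
    using that
  proof (induction rule: rtrancl_induct)
    case (step y z)
    have yz: "(y, z) \<in> T \<or> (z, y) \<in> T" using step.hyps(2) by auto
    from step.IH show ?case
    proof
      assume ay: "(a, y) \<in> conn (T \<inter> E1)"
      have "T \<inter> E1 \<subseteq> V1 \<times> V1" using E1_subset by blast
      then have "y \<in> V1" using conn_closed[OF ay terminals_in_V1(1)] by blast
      then show ?thesis using conn_from_a_step[OF T _ ay assms(2) yz] by blast
    next
      assume ay: "(a, y) \<in> conn (T \<inter> E2)"
      have T': "T \<subseteq> E2 \<union> E1" using T by auto
      have "T \<inter> E2 \<subseteq> V2 \<times> V2" using E2_subset by blast
      then have "y \<in> V2" using conn_closed[OF ay parallel_comp.terminals_in_V1(1)[OF swap]] by blast
      then show ?thesis using parallel_comp.conn_from_a_step[OF swap T' _ ay assms(3) yz] by blast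
    qed
  qed simp
  with \<open>(a, b) \<in> conn T\<close> show False using assms(2,3) by blast
qed

lemma spanning_tree_restrict:
  assumes T: "T \<in> spanning_trees (V1 \<union> V2) (E1 \<union> E2)" and ab: "(a, b) \<in> conn (T \<inter> E1)"
  shows "T \<inter> E1 \<in> spanning_trees V1 E1 \<and> T \<inter> E2 \<in> two_forests V2 E2 a b"
proof -
  interpret swapped: parallel_comp V2 V1 E2 E1 a b by (rule swap)
  have TE: "T \<subseteq> E1 \<union> E2" "T \<subseteq> E2 \<union> E1" using T spanning_trees_subset by blast+
  have cover: "(x, a) \<in> conn T \<or> (x, b) \<in> conn T" if "x \<in> V1 \<union> V2" for x
    using spanning_trees_conn[OF T that] terminals_in_V1 by blast
  then have cover': "(x, a) \<in> conn T \<or> (x, b) \<in> conn T" if "x \<in> V2 \<union> V1" for x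
    using that by blast
  have to_a1: "(x, a) \<in> conn (T \<inter> E1)" if "x \<in> V1" for x
    using conn_terminals1[OF TE(1) cover that] ab conn_sym rtrancl_trans by metis
  have to_ab2: "(x, a) \<in> conn (T \<inter> E2) \<or> (x, b) \<in> conn (T \<inter> E2)" if "x \<in> V2" for x
    using swapped.conn_terminals1[OF TE(2) cover' that] .
  have "card V1 \<le> card (T \<inter> E1) + 1"
    using card_le_Suc_if_conn[OF finite_V1 _ terminals_in_V1(1)] to_a1 finite_E1 by blast
  moreover have "card V2 \<le> card (T \<inter> E2) + 2" using swapped.card_V1_le_restrict[OF TE(2) cover'] .
  moreover have "card T = card V1 + card V2 - 3"
    using spanning_trees_card[OF T] card_Un two_le_card_V1 swapped.two_le_card_V1 by simp
  ultimately have cards: "card (T \<inter> E1) = card V1 - 1" "card (T \<inter> E2) = card V2 - 2"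
    using card_edges_split[OF TE(1)] two_le_card_V1 swapped.two_le_card_V1 by linarith+
  have "(a, b) \<notin> conn (T \<inter> E2)"
  proof
    assume "(a, b) \<in> conn (T \<inter> E2)"
    then have "\<forall>x\<in>V2. (x, a) \<in> conn (T \<inter> E2)" using to_ab2 conn_sym rtrancl_trans by metis
    then have "card V2 \<le> card (T \<inter> E2) + 1"
      using card_le_Suc_if_conn[OF finite_V2 _ swapped.terminals_in_V1(1)] swapped.finite_E1 by blast
    then show False using cards swapped.two_le_card_V1 by linarith
  qed
  then show ?thesis
    using spanning_treesI[OF _ cards(1)] to_a1 cards(2) to_ab2
    unfolding two_forests_iff by blast
qed

lemma spanning_tree_combine:
  assumes T: "T \<subseteq> E1 \<union> E2"
    and T1: "T \<inter> E1 \<in> spanning_trees V1 E1" and T2: "T \<inter> E2 \<in> two_forests V2 E2 a b"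
  shows "T \<in> spanning_trees (V1 \<union> V2) (E1 \<union> E2)"
proof -
  interpret swapped: parallel_comp V2 V1 E2 E1 a b by (rule swap)
  have conn1: "(x, y) \<in> conn T" if "x \<in> V1" "y \<in> V1" for x y
    using spanning_trees_conn[OF T1 that] conn_mono[of "T \<inter> E1" T] by blast
  have "(x, a) \<in> conn T" if x: "x \<in> V1 \<union> V2" for x
  proof (cases "x \<in> V1")
    case True
    then show ?thesis using conn1 terminals_in_V1 by blast
  next
    case False
    then have "(x, a) \<in> conn (T \<inter> E2) \<or> (x, b) \<in> conn (T \<inter> E2)"
      using x T2 unfolding two_forests_iff by blast
    then have "(x, a) \<in> conn T \<or> (x, b) \<in> conn T" using conn_mono[of "T \<inter> E2" T] by blast
    moreover have "(b, a) \<in> conn T" using conn1 terminals_in_V1 by blast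
    ultimately show ?thesis using rtrancl_trans by metis
  qed
  moreover have "card T = card (V1 \<union> V2) - 1"
    using card_edges_split[OF T] spanning_trees_card[OF T1] two_forests_card[OF T2]
      card_Un two_le_card_V1 swapped.two_le_card_V1 by simp
  ultimately show ?thesis using spanning_treesI[OF T] by blast
qed

lemma spanning_trees_Un:
  "spanning_trees (V1 \<union> V2) (E1 \<union> E2) = {T. T \<subseteq> E1 \<union> E2 \<and>
     (T \<inter> E1 \<in> spanning_trees V1 E1 \<and> T \<inter> E2 \<in> two_forests V2 E2 a b \<or>
      T \<inter> E1 \<in> two_forests V1 E1 a b \<and> T \<inter> E2 \<in> spanning_trees V2 E2)}"
    (is "_ = ?R")
proof (rule set_eqI)
  interpret swapped: parallel_comp V2 V1 E2 E1 a b by (rule swap)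
  fix T
  show "T \<in> spanning_trees (V1 \<union> V2) (E1 \<union> E2) \<longleftrightarrow> T \<in> ?R"
  proof
    assume T: "T \<in> spanning_trees (V1 \<union> V2) (E1 \<union> E2)"
    then have TE: "T \<subseteq> E1 \<union> E2" using spanning_trees_subset by blast
    have "(a, b) \<in> conn T" using spanning_trees_conn[OF T] terminals_in_V1 by blast
    then have "(a, b) \<in> conn (T \<inter> E1) \<or> (a, b) \<in> conn (T \<inter> E2)" using not_conn_Un[OF TE] by blast
    then show "T \<in> ?R"
      using TE spanning_tree_restrict[OF T] swapped.spanning_tree_restrict[of T] T
      by (auto simp: Un_commute)
  next
    assume "T \<in> ?R"
    then show "T \<in> spanning_trees (V1 \<union> V2) (E1 \<union> E2)"
      using spanning_tree_combine[of T] swapped.spanning_tree_combine[of T] by (auto simp: Un_commute)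
  qed
qed

lemma two_forests_Un:
  "two_forests (V1 \<union> V2) (E1 \<union> E2) a b =
     {T. T \<subseteq> E1 \<union> E2 \<and> T \<inter> E1 \<in> two_forests V1 E1 a b \<and> T \<inter> E2 \<in> two_forests V2 E2 a b}"
    (is "_ = ?R")
proof (rule set_eqI)
  interpret swapped: parallel_comp V2 V1 E2 E1 a b by (rule swap)
  fix T
  show "T \<in> two_forests (V1 \<union> V2) (E1 \<union> E2) a b \<longleftrightarrow> T \<in> ?R"
  proof
    assume T: "T \<in> two_forests (V1 \<union> V2) (E1 \<union> E2) a b"
    then have TE: "T \<subseteq> E1 \<union> E2" using two_forests_subset[of "V1 \<union> V2" "E1 \<union> E2" a b] by blast
    then have TE': "T \<subseteq> E2 \<union> E1" by blast
    have cover: "(x, a) \<in> conn T \<or> (x, b) \<in> conn T" if "x \<in> V1 \<union> V2" for x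
      using two_forests_conn[OF T that] .
    then have cover': "(x, a) \<in> conn T \<or> (x, b) \<in> conn T" if "x \<in> V2 \<union> V1" for x
      using that by blast
    have "card T = card V1 + card V2 - 4"
      using two_forests_card[OF T] card_Un two_le_card_V1 swapped.two_le_card_V1 by simp
    then have cards: "card (T \<inter> E1) = card V1 - 2" "card (T \<inter> E2) = card V2 - 2"
      using card_V1_le_restrict[OF TE cover] swapped.card_V1_le_restrict[OF TE' cover']
        card_edges_split[OF TE] two_le_card_V1 swapped.two_le_card_V1 by linarith+
    have "(a, b) \<notin> conn T" using two_forests_not_conn[OF T] .
    then have "(a, b) \<notin> conn (T \<inter> E1)" "(a, b) \<notin> conn (T \<inter> E2)"
      using conn_mono[of "T \<inter> E1" T] conn_mono[of "T \<inter> E2" T] by blast+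
    then have "T \<inter> E1 \<in> two_forests V1 E1 a b" "T \<inter> E2 \<in> two_forests V2 E2 a b"
      using cards conn_terminals1[OF TE cover] swapped.conn_terminals1[OF TE' cover']
      unfolding two_forests_iff by blast+
    then show "T \<in> ?R" using TE by blast
  next
    assume "T \<in> ?R"
    then have T: "T \<subseteq> E1 \<union> E2" and T1: "T \<inter> E1 \<in> two_forests V1 E1 a b"
      and T2: "T \<inter> E2 \<in> two_forests V2 E2 a b" by auto
    have "(x, a) \<in> conn T \<or> (x, b) \<in> conn T" if "x \<in> V1 \<union> V2" for x
    proof -
      have "(x, a) \<in> conn (T \<inter> E1) \<or> (x, b) \<in> conn (T \<inter> E1) \<or>
            (x, a) \<in> conn (T \<inter> E2) \<or> (x, b) \<in> conn (T \<inter> E2)"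
        using that T1 T2 unfolding two_forests_iff by blast
      then show ?thesis using conn_mono[of "T \<inter> E1" T] conn_mono[of "T \<inter> E2" T] by blast
    qed
    moreover have "(a, b) \<notin> conn T" using not_conn_Un[OF T] T1 T2 unfolding two_forests_iff by blast
    moreover have "card T = card (V1 \<union> V2) - 2"
      using card_edges_split[OF T] two_forests_card[OF T1] two_forests_card[OF T2]
        card_Un two_le_card_V1 swapped.two_le_card_V1 by simp
    ultimately show "T \<in> two_forests (V1 \<union> V2) (E1 \<union> E2) a b"
      using T unfolding two_forests_iff by blast
  qed
qed

lemma tree_poly_Un:
  "tree_poly (V1 \<union> V2) (E1 \<union> E2) w =
     tree_poly V1 E1 w * forest_poly V2 E2 a b w + forest_poly V1 E1 a b w * tree_poly V2 E2 w"
  unfolding tree_poly_def forest_poly_def spanning_trees_Un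
  by (rule sum_prod_Int_split2[OF finite_E1 parallel_comp.finite_E1[OF swap] E1_Int_E2
        spanning_trees_subset two_forests_subset two_forests_subset spanning_trees_subset
        spanning_trees_Int_two_forests[OF two_le_card_V1]])

lemma forest_poly_Un:
  "forest_poly (V1 \<union> V2) (E1 \<union> E2) a b w = forest_poly V1 E1 a b w * forest_poly V2 E2 a b w"
  unfolding forest_poly_def two_forests_Un
  by (rule sum_prod_Int_split[OF finite_E1 parallel_comp.finite_E1[OF swap] E1_Int_E2
        two_forests_subset two_forests_subset])

end

locale series_comp =
  fixes V1 V2 :: "'v set" and E1 E2 :: "('v \<times> 'v) set" and a m b :: 'v
  assumes finite_V1: "finite V1" and finite_V2: "finite V2"
    and E1_subset: "E1 \<subseteq> V1 \<times> V1" and E2_subset: "E2 \<subseteq> V2 \<times> V2"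
    and V1_Int_V2: "V1 \<inter> V2 = {m}" and a_in_V1: "a \<in> V1" and b_in_V2: "b \<in> V2"
    and a_neq_m: "a \<noteq> m" and b_neq_m: "b \<noteq> m" and E1_Int_E2: "E1 \<inter> E2 = {}"
begin

lemma swap: "series_comp V2 V1 E2 E1 b m a"
  using finite_V1 finite_V2 E1_subset E2_subset V1_Int_V2 a_in_V1 b_in_V2 a_neq_m b_neq_m E1_Int_E2
  by unfold_locales auto

lemma finite_E1: "finite E1"
  using finite_subset[OF E1_subset] finite_V1 by blast

lemma m_in_V1: "m \<in> V1"
  using V1_Int_V2 by auto

lemma b_notin_V1: "b \<notin> V1"
  using V1_Int_V2 b_in_V2 b_neq_m by auto

lemma two_le_card_V1: "2 \<le> card V1"
proof -
  have "card {a, m} \<le> card V1" using a_in_V1 m_in_V1 by (intro card_mono finite_V1) auto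
  then show ?thesis using a_neq_m by simp
qed

lemma card_Un: "card (V1 \<union> V2) = card V1 + card V2 - 1"
proof -
  have "card (V1 \<union> V2) + card (V1 \<inter> V2) = card V1 + card V2"
    using card_Un_Int finite_V1 finite_V2 by metis
  then show ?thesis using V1_Int_V2 by simp
qed

lemma card_edges_split:
  assumes "T \<subseteq> E1 \<union> E2"
  shows "card T = card (T \<inter> E1) + card (T \<inter> E2)"
proof -
  have "T = (T \<inter> E1) \<union> (T \<inter> E2)" using assms by auto
  moreover have "finite (T \<inter> E1)" "finite (T \<inter> E2)"
    using finite_E1 series_comp.finite_E1[OF swap] by auto
  moreover have "(T \<inter> E1) \<inter> (T \<inter> E2) = {}" using E1_Int_E2 by auto
  ultimately show ?thesis by (metis card_Un_disjoint)
qed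

lemma conn_restrict1:
  assumes "T \<subseteq> E1 \<union> E2" "x \<in> V1" "(x, y) \<in> conn T"
  shows "(y \<in> V1 \<and> (x, y) \<in> conn (T \<inter> E1)) \<or> (x, m) \<in> conn (T \<inter> E1)"
  using conn_through_cut[OF assms(3,2,1) E1_subset E2_subset, of "{m}"] V1_Int_V2 by auto

lemma conn_to_m1:
  assumes T: "T \<in> spanning_trees (V1 \<union> V2) (E1 \<union> E2)" and x: "x \<in> V1"
  shows "(x, m) \<in> conn (T \<inter> E1)"
proof -
  have "T \<subseteq> E1 \<union> E2" using T spanning_trees_subset[of "V1 \<union> V2" "E1 \<union> E2"] by blast
  moreover have "(x, m) \<in> conn T" using spanning_trees_conn[OF T] x m_in_V1 by blast
  ultimately show ?thesis using conn_restrict1 x by blast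
qed

lemma spanning_trees_Un:
  "spanning_trees (V1 \<union> V2) (E1 \<union> E2) =
     {T. T \<subseteq> E1 \<union> E2 \<and> T \<inter> E1 \<in> spanning_trees V1 E1 \<and> T \<inter> E2 \<in> spanning_trees V2 E2}"
    (is "_ = ?R")
proof (rule set_eqI)
  interpret swapped: series_comp V2 V1 E2 E1 b m a by (rule swap)
  fix T
  show "T \<in> spanning_trees (V1 \<union> V2) (E1 \<union> E2) \<longleftrightarrow> T \<in> ?R"
  proof
    assume T: "T \<in> spanning_trees (V1 \<union> V2) (E1 \<union> E2)"
    then have TE: "T \<subseteq> E1 \<union> E2" using spanning_trees_subset[of "V1 \<union> V2" "E1 \<union> E2"] by blast
    have T': "T \<in> spanning_trees (V2 \<union> V1) (E2 \<union> E1)" using T by (simp add: Un_commute)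
    have to_m1: "\<forall>x\<in>V1. (x, m) \<in> conn (T \<inter> E1)" using conn_to_m1[OF T] by blast
    have to_m2: "\<forall>x\<in>V2. (x, m) \<in> conn (T \<inter> E2)" using swapped.conn_to_m1[OF T'] by blast
    have "card V1 \<le> card (T \<inter> E1) + 1"
      using card_le_Suc_if_conn[OF finite_V1 _ m_in_V1] to_m1 finite_E1 by simp
    moreover have "card V2 \<le> card (T \<inter> E2) + 1"
      using card_le_Suc_if_conn[OF finite_V2 _ swapped.m_in_V1] to_m2 swapped.finite_E1 by simp
    moreover have "card T = card V1 + card V2 - 2"
      using spanning_trees_card[OF T] card_Un two_le_card_V1 swapped.two_le_card_V1 by simp
    ultimately have "card (T \<inter> E1) = card V1 - 1" "card (T \<inter> E2) = card V2 - 1"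
      using card_edges_split[OF TE] two_le_card_V1 swapped.two_le_card_V1 by linarith+
    then show "T \<in> ?R" using TE to_m1 to_m2 spanning_treesI[of "T \<inter> _"] by blast
  next
    assume "T \<in> ?R"
    then have T: "T \<subseteq> E1 \<union> E2" and T1: "T \<inter> E1 \<in> spanning_trees V1 E1"
      and T2: "T \<inter> E2 \<in> spanning_trees V2 E2" by auto
    have "(x, m) \<in> conn T" if "x \<in> V1 \<union> V2" for x
      using that spanning_trees_conn[OF T1 _ m_in_V1] spanning_trees_conn[OF T2 _ swapped.m_in_V1]
        conn_mono[of "T \<inter> E1" T] conn_mono[of "T \<inter> E2" T] by blast
    moreover have "card T = card (V1 \<union> V2) - 1"
      using card_edges_split[OF T] spanning_trees_card[OF T1] spanning_trees_card[OF T2]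
        card_Un two_le_card_V1 swapped.two_le_card_V1 by simp
    ultimately show "T \<in> spanning_trees (V1 \<union> V2) (E1 \<union> E2)"
      using spanning_treesI[OF T] by blast
  qed
qed

lemma two_forest_restrict:
  assumes T: "T \<in> two_forests (V1 \<union> V2) (E1 \<union> E2) a b" and am: "(a, m) \<in> conn (T \<inter> E1)"
  shows "T \<inter> E1 \<in> spanning_trees V1 E1 \<and> T \<inter> E2 \<in> two_forests V2 E2 m b"
proof -
  interpret swapped: series_comp V2 V1 E2 E1 b m a by (rule swap)
  have TE: "T \<subseteq> E1 \<union> E2" using T two_forests_subset[of "V1 \<union> V2" "E1 \<union> E2" a b] by blast
  then have TE': "T \<subseteq> E2 \<union> E1" by blast
  have to_m1: "(x, m) \<in> conn (T \<inter> E1)" if x: "x \<in> V1" for x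
  proof -
    have "(x, a) \<in> conn T \<or> (x, b) \<in> conn T" using two_forests_conn[OF T] x by blast
    then have "(x, a) \<in> conn (T \<inter> E1) \<or> (x, m) \<in> conn (T \<inter> E1)"
      using conn_restrict1[OF TE x, of a] conn_restrict1[OF TE x, of b] b_notin_V1 by blast
    then show ?thesis using am rtrancl_trans by metis
  qed
  have to_mb2: "(x, m) \<in> conn (T \<inter> E2) \<or> (x, b) \<in> conn (T \<inter> E2)" if x: "x \<in> V2" for x
  proof -
    have "(x, a) \<in> conn T \<or> (x, b) \<in> conn T" using two_forests_conn[OF T] x by blast
    then show ?thesis
      using swapped.conn_restrict1[OF TE' x, of a] swapped.conn_restrict1[OF TE' x, of b]
        swapped.b_notin_V1 by blast
  qed
  have "card V1 \<le> card (T \<inter> E1) + 1"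
    using card_le_Suc_if_conn[OF finite_V1 _ m_in_V1] to_m1 finite_E1 by simp
  moreover have "card V2 \<le> card (T \<inter> E2) + 2"
    using card_le_add2_if_conn[OF finite_V2 _ swapped.m_in_V1 b_in_V2] to_mb2 swapped.finite_E1 by simp
  moreover have "card T = card V1 + card V2 - 3"
    using two_forests_card[OF T] card_Un two_le_card_V1 swapped.two_le_card_V1 by simp
  ultimately have cards: "card (T \<inter> E1) = card V1 - 1" "card (T \<inter> E2) = card V2 - 2"
    using card_edges_split[OF TE] two_le_card_V1 swapped.two_le_card_V1 by linarith+
  have "(m, b) \<notin> conn (T \<inter> E2)"
  proof
    assume "(m, b) \<in> conn (T \<inter> E2)"
    then have "(a, b) \<in> conn T"
      using am conn_mono[of "T \<inter> E1" T] conn_mono[of "T \<inter> E2" T] rtrancl_trans by (metis Int_lower1)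
    then show False using two_forests_not_conn[OF T] by blast
  qed
  then show ?thesis
    using spanning_treesI[of "T \<inter> E1" E1 V1 m] cards to_m1 to_mb2 unfolding two_forests_iff by blast
qed

lemma two_forest_combine:
  assumes T: "T \<subseteq> E1 \<union> E2"
    and T1: "T \<inter> E1 \<in> spanning_trees V1 E1" and T2: "T \<inter> E2 \<in> two_forests V2 E2 m b"
  shows "T \<in> two_forests (V1 \<union> V2) (E1 \<union> E2) a b"
proof -
  interpret swapped: series_comp V2 V1 E2 E1 b m a by (rule swap)
  have conn1: "(x, y) \<in> conn T" if "x \<in> V1" "y \<in> V1" for x y
    using spanning_trees_conn[OF T1 that] conn_mono[of "T \<inter> E1" T] by blast
  have "(x, a) \<in> conn T \<or> (x, b) \<in> conn T" if x: "x \<in> V1 \<union> V2" for x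
  proof (cases "x \<in> V1")
    case True
    then show ?thesis using conn1 a_in_V1 by blast
  next
    case False
    then have "(x, m) \<in> conn (T \<inter> E2) \<or> (x, b) \<in> conn (T \<inter> E2)"
      using x two_forests_conn[OF T2] by blast
    then have "(x, m) \<in> conn T \<or> (x, b) \<in> conn T" using conn_mono[of "T \<inter> E2" T] by blast
    moreover have "(m, a) \<in> conn T" using conn1 m_in_V1 a_in_V1 by blast
    ultimately show ?thesis using rtrancl_trans by metis
  qed
  moreover have "(a, b) \<notin> conn T"
  proof
    assume "(a, b) \<in> conn T"
    then have "(b, a) \<in> conn T" by (rule conn_sym)
    moreover have "T \<subseteq> E2 \<union> E1" using T by blast
    ultimately have "(b, m) \<in> conn (T \<inter> E2)"
      using swapped.conn_restrict1[of T b a] swapped.b_notin_V1 b_in_V2 by blast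
    then show False using two_forests_not_conn[OF T2] conn_sym by metis
  qed
  moreover have "card T = card (V1 \<union> V2) - 2"
    using card_edges_split[OF T] spanning_trees_card[OF T1] two_forests_card[OF T2]
      card_Un two_le_card_V1 swapped.two_le_card_V1 by simp
  ultimately show ?thesis using T unfolding two_forests_iff by blast
qed

lemma two_forests_Un:
  "two_forests (V1 \<union> V2) (E1 \<union> E2) a b = {T. T \<subseteq> E1 \<union> E2 \<and>
     (T \<inter> E1 \<in> spanning_trees V1 E1 \<and> T \<inter> E2 \<in> two_forests V2 E2 m b \<or>
      T \<inter> E1 \<in> two_forests V1 E1 a m \<and> T \<inter> E2 \<in> spanning_trees V2 E2)}"
    (is "_ = ?R")
proof (rule set_eqI)
  interpret swapped: series_comp V2 V1 E2 E1 b m a by (rule swap)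
  fix T
  show "T \<in> two_forests (V1 \<union> V2) (E1 \<union> E2) a b \<longleftrightarrow> T \<in> ?R"
  proof
    assume T: "T \<in> two_forests (V1 \<union> V2) (E1 \<union> E2) a b"
    then have TE: "T \<subseteq> E1 \<union> E2" using two_forests_subset[of "V1 \<union> V2" "E1 \<union> E2" a b] by blast
    then have TE': "T \<subseteq> E2 \<union> E1" by blast
    show "T \<in> ?R"
    proof (cases "(a, m) \<in> conn (T \<inter> E1)")
      case True
      then show ?thesis using TE two_forest_restrict[OF T] by blast
    next
      case False
      have "(m, a) \<in> conn T \<or> (m, b) \<in> conn T" using two_forests_conn[OF T] m_in_V1 by blast
      moreover have "(a, m) \<notin> conn T"
        using False conn_restrict1[OF TE a_in_V1, of m] by blast
      ultimately have "(b, m) \<in> conn T" using conn_sym by metis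
      then have "(b, m) \<in> conn (T \<inter> E2)" using swapped.conn_restrict1[OF TE' b_in_V2] by blast
      moreover have "T \<in> two_forests (V2 \<union> V1) (E2 \<union> E1) b a"
        using T two_forests_commute by (metis Un_commute)
      ultimately have "T \<inter> E2 \<in> spanning_trees V2 E2 \<and> T \<inter> E1 \<in> two_forests V1 E1 m a"
        using swapped.two_forest_restrict by blast
      then show ?thesis using TE two_forests_commute[of V1 E1 m a] by blast
    qed
  next
    assume "T \<in> ?R"
    then have TE: "T \<subseteq> E1 \<union> E2" and cases:
      "T \<inter> E1 \<in> spanning_trees V1 E1 \<and> T \<inter> E2 \<in> two_forests V2 E2 m b \<or>
       T \<inter> E1 \<in> two_forests V1 E1 a m \<and> T \<inter> E2 \<in> spanning_trees V2 E2" by auto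
    then show "T \<in> two_forests (V1 \<union> V2) (E1 \<union> E2) a b"
    proof (elim disjE conjE)
      assume "T \<inter> E1 \<in> two_forests V1 E1 a m" "T \<inter> E2 \<in> spanning_trees V2 E2"
      then have "T \<in> two_forests (V2 \<union> V1) (E2 \<union> E1) b a"
        using swapped.two_forest_combine[of T] TE two_forests_commute[of V1 E1 a m] by auto
      then show ?thesis using two_forests_commute by (metis Un_commute)
    qed (use two_forest_combine[OF TE] in blast)
  qed
qed

lemma tree_poly_Un:
  "tree_poly (V1 \<union> V2) (E1 \<union> E2) w = tree_poly V1 E1 w * tree_poly V2 E2 w"
  unfolding tree_poly_def spanning_trees_Un
  by (rule sum_prod_Int_split[OF finite_E1 series_comp.finite_E1[OF swap] E1_Int_E2
        spanning_trees_subset spanning_trees_subset])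

lemma forest_poly_Un:
  "forest_poly (V1 \<union> V2) (E1 \<union> E2) a b w =
     tree_poly V1 E1 w * forest_poly V2 E2 m b w + forest_poly V1 E1 a m w * tree_poly V2 E2 w"
  unfolding tree_poly_def forest_poly_def two_forests_Un
  by (rule sum_prod_Int_split2[OF finite_E1 series_comp.finite_E1[OF swap] E1_Int_E2
        spanning_trees_subset two_forests_subset two_forests_subset spanning_trees_subset
        spanning_trees_Int_two_forests[OF two_le_card_V1]])

end

lemma parallel_comp_insert:
  assumes "finite I" "i \<notin> I" "a \<noteq> b"
    and "\<And>j. j \<in> insert i I \<Longrightarrow> finite (V j) \<and> E j \<subseteq> V j \<times> V j \<and> a \<in> V j \<and> b \<in> V j"
    and "\<And>j l. j \<in> insert i I \<Longrightarrow> l \<in> insert i I \<Longrightarrow> j \<noteq> l \<Longrightarrow> V j \<inter> V l = {a, b} \<and> E j \<inter> E l = {}"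
  shows "parallel_comp (V i) ({a, b} \<union> \<Union>(V ` I)) (E i) (\<Union>(E ` I)) a b"
proof
  show "finite (V i)" "E i \<subseteq> V i \<times> V i" using assms(4) by auto
  show "finite ({a, b} \<union> \<Union>(V ` I))" using assms(1,4) by auto
  show "\<Union>(E ` I) \<subseteq> ({a, b} \<union> \<Union>(V ` I)) \<times> ({a, b} \<union> \<Union>(V ` I))" using assms(4) by blast
  have "V i \<inter> V j = {a, b}" if "j \<in> I" for j using assms(5)[of i j] assms(2) that by auto
  then show "V i \<inter> ({a, b} \<union> \<Union>(V ` I)) = {a, b}" using assms(4)[of i] by auto
  show "E i \<inter> \<Union>(E ` I) = {}" using assms(2,5) by auto
qed (rule assms(3))

lemma forest_poly_parallel:
  assumes "finite I" "a \<noteq> b"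
    and "\<And>i. i \<in> I \<Longrightarrow> finite (V i) \<and> E i \<subseteq> V i \<times> V i \<and> a \<in> V i \<and> b \<in> V i"
    and "\<And>i j. i \<in> I \<Longrightarrow> j \<in> I \<Longrightarrow> i \<noteq> j \<Longrightarrow> V i \<inter> V j = {a, b} \<and> E i \<inter> E j = {}"
  shows "forest_poly ({a, b} \<union> \<Union>(V ` I)) (\<Union>(E ` I)) a b w = (\<Prod>i\<in>I. forest_poly (V i) (E i) a b w)"
  using assms(1,3,4)
proof (induction I rule: finite_induct)
  case empty
  show ?case using forest_poly_no_edges[OF assms(2)] by simp
next
  case (insert i I)
  interpret parallel_comp "V i" "{a, b} \<union> \<Union>(V ` I)" "E i" "\<Union>(E ` I)" a b
    using parallel_comp_insert[OF insert.hyps assms(2) insert.prems] .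
  have "{a, b} \<union> \<Union>(V ` insert i I) = V i \<union> ({a, b} \<union> \<Union>(V ` I))" using terminals_in_V1 by auto
  then show ?case using forest_poly_Un insert by simp
qed

lemma tree_poly_parallel:
  assumes "finite I" "a \<noteq> b"
    and "\<And>i. i \<in> I \<Longrightarrow> finite (V i) \<and> E i \<subseteq> V i \<times> V i \<and> a \<in> V i \<and> b \<in> V i"
    and "\<And>i j. i \<in> I \<Longrightarrow> j \<in> I \<Longrightarrow> i \<noteq> j \<Longrightarrow> V i \<inter> V j = {a, b} \<and> E i \<inter> E j = {}"
  shows "tree_poly ({a, b} \<union> \<Union>(V ` I)) (\<Union>(E ` I)) w =
           (\<Sum>i\<in>I. tree_poly (V i) (E i) w * (\<Prod>j\<in>I - {i}. forest_poly (V j) (E j) a b w))"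
  using assms(1,3,4)
proof (induction I rule: finite_induct)
  case empty
  show ?case using tree_poly_no_edges[OF assms(2)] by simp
next
  case (insert i I)
  interpret parallel_comp "V i" "{a, b} \<union> \<Union>(V ` I)" "E i" "\<Union>(E ` I)" a b
    using parallel_comp_insert[OF insert.hyps assms(2) insert.prems] .
  define t where "t j = tree_poly (V j) (E j) w" for j
  define f where "f j = forest_poly (V j) (E j) a b w" for j
  have "{a, b} \<union> \<Union>(V ` insert i I) = V i \<union> ({a, b} \<union> \<Union>(V ` I))" using terminals_in_V1 by auto
  then have "tree_poly ({a, b} \<union> \<Union>(V ` insert i I)) (\<Union>(E ` insert i I)) w =
      t i * (\<Prod>j\<in>I. f j) + f i * (\<Sum>j\<in>I. t j * (\<Prod>l\<in>I - {j}. f l))"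
    using tree_poly_Un forest_poly_parallel[OF insert.hyps(1) assms(2)] insert unfolding t_def f_def by simp
  also have "\<dots> = (\<Sum>j\<in>insert i I. t j * (\<Prod>l\<in>insert i I - {j}. f l))"
  proof -
    have "(\<Prod>l\<in>insert i I - {j}. f l) = f i * (\<Prod>l\<in>I - {j}. f l)" if "j \<in> I" for j
    proof -
      have "insert i I - {j} = insert i (I - {j})" using that insert.hyps(2) by auto
      then show ?thesis using insert.hyps by simp
    qed
    then show ?thesis using insert.hyps by (simp add: sum_distrib_left mult.left_commute)
  qed
  finally show ?case unfolding t_def f_def .
qed

lemma sum_mult_prod_remove:
  fixes t g :: "'i \<Rightarrow> 'a::comm_semiring_1"
  assumes "finite I"
  shows "(\<Sum>i\<in>I. t i * g i * (\<Prod>j\<in>I - {i}. c * g j)) = c ^ (card I - 1) * (\<Prod>j\<in>I. g j) * (\<Sum>i\<in>I. t i)"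
proof -
  have "t i * g i * (\<Prod>j\<in>I - {i}. c * g j) = c ^ (card I - 1) * (\<Prod>j\<in>I. g j) * t i" if "i \<in> I" for i
  proof -
    have "(\<Prod>j\<in>I - {i}. c * g j) = c ^ (card I - 1) * (\<Prod>j\<in>I - {i}. g j)"
      using that assms by (simp add: prod.distrib card_Diff_singleton)
    moreover have "(\<Prod>j\<in>I. g j) = g i * (\<Prod>j\<in>I - {i}. g j)" using prod.remove[OF assms that] .
    ultimately show ?thesis by (simp add: algebra_simps)
  qed
  then show ?thesis by (simp add: sum_distrib_left)
qed

section \<open>Elementary symmetric polynomials\<close>

lemma esym_0: "finite A \<Longrightarrow> esym x 0 A = 1"
proof -
  assume "finite A"
  then have "{T. T \<subseteq> A \<and> card T = 0} = {{}}" using finite_subset by (fastforce simp: card_eq_0_iff)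
  then show ?thesis unfolding esym_def by simp
qed

lemma esym_fun_upd: "j \<notin> A \<Longrightarrow> esym (x(j := t)) m A = esym x m A"
  unfolding esym_def by (intro sum.cong refl prod.cong) auto

lemma esym_Suc_remove:
  assumes "finite A" "j \<in> A"
  shows "esym x (Suc m) A = x j * esym x m (A - {j}) + esym x (Suc m) (A - {j})"
proof -
  define F0 where "F0 = {T. T \<subseteq> A - {j} \<and> card T = Suc m}"
  define F1 where "F1 = {T. T \<subseteq> A - {j} \<and> card T = m}"
  have split: "{T. T \<subseteq> A \<and> card T = Suc m} = F0 \<union> insert j ` F1"
  proof (intro equalityI subsetI)
    fix T assume "T \<in> {T. T \<subseteq> A \<and> card T = Suc m}"
    then have T: "T \<subseteq> A" "card T = Suc m" "finite T" using assms(1) finite_subset by auto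
    show "T \<in> F0 \<union> insert j ` F1"
    proof (cases "j \<in> T")
      case True
      then have "T = insert j (T - {j})" "T - {j} \<in> F1" using T unfolding F1_def by auto
      then show ?thesis by blast
    qed (use T in \<open>auto simp: F0_def\<close>)
  next
    fix T assume "T \<in> F0 \<union> insert j ` F1"
    moreover have "card (insert j S) = Suc m" if "S \<in> F1" for S
    proof -
      have "finite S" using that assms(1) unfolding F1_def by (auto intro: rev_finite_subset)
      moreover have "j \<notin> S" using that unfolding F1_def by auto
      ultimately show ?thesis using that unfolding F1_def by simp
    qed
    ultimately show "T \<in> {T. T \<subseteq> A \<and> card T = Suc m}" using assms(2) unfolding F0_def F1_def by auto
  qed
  have fin: "finite F0" "finite (insert j ` F1)" unfolding F0_def F1_def using assms(1) by auto
  have disj: "F0 \<inter> insert j ` F1 = {}" unfolding F0_def by auto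
  have inj: "inj_on (insert j) F1"
    unfolding F1_def by (rule inj_onI) (metis Diff_insert_absorb DiffE insertI1 mem_Collect_eq subsetD)
  have "(\<Sum>T\<in>insert j ` F1. \<Prod>i\<in>T. x i) = (\<Sum>S\<in>F1. \<Prod>i\<in>insert j S. x i)"
    by (simp add: sum.reindex[OF inj])
  also have "\<dots> = (\<Sum>S\<in>F1. x j * (\<Prod>i\<in>S. x i))"
  proof (rule sum.cong[OF refl])
    fix S assume "S \<in> F1"
    then have "finite S" "j \<notin> S" unfolding F1_def using assms(1) finite_subset by auto
    then show "(\<Prod>i\<in>insert j S. x i) = x j * (\<Prod>i\<in>S. x i)" by simp
  qed
  finally have "(\<Sum>T\<in>insert j ` F1. \<Prod>i\<in>T. x i) = x j * esym x m (A - {j})"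
    unfolding esym_def F1_def by (simp add: sum_distrib_left)
  then show ?thesis unfolding esym_def[of x "Suc m" A] split sum.union_disjoint[OF fin disj]
    unfolding F0_def esym_def by simp
qed

lemma bij_betw_insert_Sigma:
  assumes "finite C"
  shows "bij_betw (\<lambda>(a, S). (insert a S, a))
           (SIGMA a:C. {S. S \<subseteq> C - {a} \<and> P (card S)})
           (SIGMA S:{S. S \<subseteq> C \<and> 0 < card S \<and> P (card S - 1)}. S)"
proof (rule bij_betw_byWitness[where f' = "\<lambda>(S, a). (a, S - {a})"])
  have "card (insert a S) = Suc (card S)" if "S \<subseteq> C - {a}" for a S
  proof -
    have "finite S" using that assms by (auto intro: rev_finite_subset)
    moreover have "a \<notin> S" using that by auto
    ultimately show ?thesis by simp
  qed
  then show "(\<lambda>(a, S). (insert a S, a)) ` (SIGMA a:C. {S. S \<subseteq> C - {a} \<and> P (card S)})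
      \<subseteq> (SIGMA S:{S. S \<subseteq> C \<and> 0 < card S \<and> P (card S - 1)}. S)" by auto
  have "card (S - {a}) = card S - 1" if "S \<subseteq> C" "a \<in> S" for a S
    using that assms finite_subset[of S C] by auto
  then show "(\<lambda>(S, a). (a, S - {a})) ` (SIGMA S:{S. S \<subseteq> C \<and> 0 < card S \<and> P (card S - 1)}. S)
      \<subseteq> (SIGMA a:C. {S. S \<subseteq> C - {a} \<and> P (card S)})" by auto
qed auto

lemma sum_insert_subsets:
  fixes g :: "'a set \<Rightarrow> 'b::comm_semiring_1"
  assumes "finite C"
  shows "(\<Sum>a\<in>C. \<Sum>S | S \<subseteq> C - {a} \<and> P (card S). g (insert a S)) =
         (\<Sum>S | S \<subseteq> C \<and> 0 < card S \<and> P (card S - 1). of_nat (card S) * g S)"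
proof -
  have "(\<Sum>a\<in>C. \<Sum>S | S \<subseteq> C - {a} \<and> P (card S). g (insert a S)) =
        (\<Sum>(a, S)\<in>(SIGMA a:C. {S. S \<subseteq> C - {a} \<and> P (card S)}). g (insert a S))"
    using assms by (intro sum.Sigma) auto
  also have "\<dots> = (\<Sum>(S, a)\<in>(SIGMA S:{S. S \<subseteq> C \<and> 0 < card S \<and> P (card S - 1)}. S). g S)"
    using sum.reindex_bij_betw[OF bij_betw_insert_Sigma[OF assms], of "\<lambda>(S, a). g S"]
    by (simp add: split_def)
  also have "\<dots> = (\<Sum>S | S \<subseteq> C \<and> 0 < card S \<and> P (card S - 1). \<Sum>a\<in>S. g S)"
    using assms by (intro sum.Sigma[symmetric]) (auto intro: rev_finite_subset)
  also have "\<dots> = (\<Sum>S | S \<subseteq> C \<and> 0 < card S \<and> P (card S - 1). of_nat (card S) * g S)"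
    by simp
  finally show ?thesis .
qed

lemma prod_insert_subsets:
  fixes g :: "'a set \<Rightarrow> 'b::comm_monoid_mult"
  assumes "finite C"
  shows "(\<Prod>a\<in>C. \<Prod>S | S \<subseteq> C - {a} \<and> P (card S). g (insert a S)) =
         (\<Prod>S | S \<subseteq> C \<and> 0 < card S \<and> P (card S - 1). g S ^ card S)"
proof -
  have "(\<Prod>a\<in>C. \<Prod>S | S \<subseteq> C - {a} \<and> P (card S). g (insert a S)) =
        (\<Prod>(a, S)\<in>(SIGMA a:C. {S. S \<subseteq> C - {a} \<and> P (card S)}). g (insert a S))"
    using assms by (intro prod.Sigma) auto
  also have "\<dots> = (\<Prod>(S, a)\<in>(SIGMA S:{S. S \<subseteq> C \<and> 0 < card S \<and> P (card S - 1)}. S). g S)"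
    using prod.reindex_bij_betw[OF bij_betw_insert_Sigma[OF assms], of "\<lambda>(S, a). g S"]
    by (simp add: split_def)
  also have "\<dots> = (\<Prod>S | S \<subseteq> C \<and> 0 < card S \<and> P (card S - 1). \<Prod>a\<in>S. g S)"
    using assms by (intro prod.Sigma[symmetric]) (auto intro: rev_finite_subset)
  also have "\<dots> = (\<Prod>S | S \<subseteq> C \<and> 0 < card S \<and> P (card S - 1). g S ^ card S)"
    by simp
  finally show ?thesis .
qed

lemma sum_mult_esym_remove:
  assumes "finite C"
  shows "(\<Sum>a\<in>C. x a * esym x m (C - {a})) = of_nat (Suc m) * esym x (Suc m) C"
proof -
  have "(\<Sum>a\<in>C. x a * esym x m (C - {a})) =
        (\<Sum>a\<in>C. \<Sum>S | S \<subseteq> C - {a} \<and> card S = m. \<Prod>i\<in>insert a S. x i)"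
  proof (rule sum.cong[OF refl])
    fix a assume "a \<in> C"
    have "(\<Sum>S | S \<subseteq> C - {a} \<and> card S = m. \<Prod>i\<in>insert a S. x i) =
          (\<Sum>S | S \<subseteq> C - {a} \<and> card S = m. x a * (\<Prod>i\<in>S. x i))"
    proof (rule sum.cong[OF refl])
      fix S assume "S \<in> {S. S \<subseteq> C - {a} \<and> card S = m}"
      then have "finite S" "a \<notin> S" using assms finite_subset by auto
      then show "(\<Prod>i\<in>insert a S. x i) = x a * (\<Prod>i\<in>S. x i)" by simp
    qed
    then show "x a * esym x m (C - {a}) = (\<Sum>S | S \<subseteq> C - {a} \<and> card S = m. \<Prod>i\<in>insert a S. x i)"
      unfolding esym_def by (simp add: sum_distrib_left)
  qed
  also have "\<dots> = (\<Sum>S | S \<subseteq> C \<and> 0 < card S \<and> card S - 1 = m. of_nat (card S) * (\<Prod>i\<in>S. x i))"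
    by (rule sum_insert_subsets[OF assms])
  also have "\<dots> = (\<Sum>S | S \<subseteq> C \<and> card S = Suc m. of_nat (Suc m) * (\<Prod>i\<in>S. x i))"
    by (rule sum.cong) auto
  also have "\<dots> = of_nat (Suc m) * esym x (Suc m) C"
    unfolding esym_def by (simp add: sum_distrib_left)
  finally show ?thesis .
qed

lemma partial_esym:
  assumes "finite A" "j \<in> A"
  shows "partial j (\<lambda>y. esym y (Suc m) A) = (\<lambda>y. esym y m (A - {j}))"
proof
  fix y
  have "esym (y(j := t)) (Suc m) A = t * esym y m (A - {j}) + esym y (Suc m) (A - {j})" for t
    using esym_Suc_remove[OF assms, of "y(j := t)" m] esym_fun_upd[of j "A - {j}" y t] by simp
  moreover have "((\<lambda>t. t * esym y m (A - {j}) + esym y (Suc m) (A - {j})) has_real_derivative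
      esym y m (A - {j})) (at (y j))"
    by (auto intro!: derivative_eq_intros)
  ultimately show "partial j (\<lambda>y. esym y (Suc m) A) y = esym y m (A - {j})"
    unfolding partial_def by (simp add: DERIV_imp_deriv)
qed

lemma foldr_partial_esym:
  assumes "finite A" "distinct L" "set L \<subseteq> A" "length L \<le> m"
  shows "foldr partial L (\<lambda>y. esym y m A) = (\<lambda>y. esym y (m - length L) (A - set L))"
  using assms(2-4)
proof (induction L)
  case (Cons j L)
  have IH: "foldr partial L (\<lambda>y. esym y m A) = (\<lambda>y. esym y (m - length L) (A - set L))"
    using Cons by auto
  have "m - length L = Suc (m - length (j # L))" "j \<in> A - set L" "finite (A - set L)"
    using Cons.prems assms(1) by auto
  then have "partial j (\<lambda>y. esym y (m - length L) (A - set L)) =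
      (\<lambda>y. esym y (m - length (j # L)) (A - set L - {j}))"
    using partial_esym[of "A - set L" j] by simp
  moreover have "A - set L - {j} = A - set (j # L)" by auto
  ultimately show ?case using IH by simp
qed simp

lemma partials_esym:
  assumes "finite A" "S \<subseteq> A" "card S \<le> m"
  shows "partials S (\<lambda>y. esym y m A) x = esym x (m - card S) (A - S)"
proof -
  have "finite S" using assms(1,2) by (rule rev_finite_subset)
  then show ?thesis unfolding partials_def
    using foldr_partial_esym[OF assms(1), of "sorted_list_of_set S" m] assms by simp
qed

fun Psi :: "(nat \<Rightarrow> real) \<Rightarrow> nat \<Rightarrow> nat set \<Rightarrow> real" where
  "Psi x 0 C = 1"
| "Psi x (Suc d) C = fact (Suc d) ^ card C * esym x (Suc d) C ^ (card C - 1) * (\<Prod>a\<in>C. Psi x d (C - {a}))"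

fun Psi_const :: "nat \<Rightarrow> nat \<Rightarrow> real" where
  "Psi_const 0 N = 1"
| "Psi_const (Suc d) N = fact (Suc d) ^ N * Psi_const d (N - 1) ^ N"

definition esym_prod :: "(nat \<Rightarrow> real) \<Rightarrow> nat \<Rightarrow> nat set \<Rightarrow> real" where
  "esym_prod x d C =
     (\<Prod>S | S \<subseteq> C \<and> card S < d. esym x (d - card S) (C - S) ^ (fact (card S) * (card C - card S - 1)))"

lemma Psi_const_pos: "Psi_const d N > 0"
  by (induction d arbitrary: N) auto

lemma power_fact_pred_power:
  fixes y :: "'a::monoid_mult"
  assumes "0 < c"
  shows "(y ^ (fact (c - 1) * K)) ^ c = y ^ (fact c * K)"
proof -
  obtain c' where "c = Suc c'" using assms gr0_implies_Suc by blast
  moreover have "fact (Suc c') * K = fact c' * K * Suc c'" by (simp add: algebra_simps)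
  ultimately show ?thesis by (simp only: power_mult[symmetric] diff_Suc_1)
qed

lemma esym_prod_remove:
  assumes C: "finite C" and a: "a \<in> C"
  shows "esym_prod x d (C - {a}) = (\<Prod>S | S \<subseteq> C - {a} \<and> card S < d.
           esym x (Suc d - card (insert a S)) (C - insert a S) ^
             (fact (card (insert a S) - 1) * (card C - card (insert a S) - 1)))"
  unfolding esym_prod_def
proof (rule prod.cong[OF refl])
  fix S assume "S \<in> {S. S \<subseteq> C - {a} \<and> card S < d}"
  then have "finite S" "a \<notin> S" using C by (auto intro: rev_finite_subset)
  then have "card (insert a S) = Suc (card S)" by simp
  moreover have "card (C - {a}) = card C - 1" using a C by simp
  moreover have "C - {a} - S = C - insert a S" by auto
  ultimately show "esym x (d - card S) (C - {a} - S) ^ (fact (card S) * (card (C - {a}) - card S - 1)) =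
      esym x (Suc d - card (insert a S)) (C - insert a S) ^
        (fact (card (insert a S) - 1) * (card C - card (insert a S) - 1))"
    by (simp add: diff_diff_add)
qed

lemma esym_prod_Suc:
  assumes C: "finite C"
  shows "esym_prod x (Suc d) C = esym x (Suc d) C ^ (card C - 1) * (\<Prod>a\<in>C. esym_prod x d (C - {a}))"
proof -
  define g where
    "g S = esym x (Suc d - card S) (C - S) ^ (fact (card S - 1) * (card C - card S - 1))" for S
  have "(\<Prod>a\<in>C. esym_prod x d (C - {a})) = (\<Prod>a\<in>C. \<Prod>S | S \<subseteq> C - {a} \<and> card S < d. g (insert a S))"
    using esym_prod_remove[OF C] unfolding g_def by simp
  also have "\<dots> = (\<Prod>S | S \<subseteq> C \<and> 0 < card S \<and> card S - 1 < d. g S ^ card S)"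
    by (rule prod_insert_subsets[OF C])
  also have "\<dots> = (\<Prod>S | S \<subseteq> C \<and> 0 < card S \<and> card S < Suc d.
      esym x (Suc d - card S) (C - S) ^ (fact (card S) * (card C - card S - 1)))"
  proof (rule prod.cong)
    fix S assume "S \<in> {S. S \<subseteq> C \<and> 0 < card S \<and> card S < Suc d}"
    then show "g S ^ card S = esym x (Suc d - card S) (C - S) ^ (fact (card S) * (card C - card S - 1))"
      unfolding g_def by (intro power_fact_pred_power) simp
  qed auto
  finally have "(\<Prod>a\<in>C. esym_prod x d (C - {a})) = \<dots>" .
  moreover have "{S. S \<subseteq> C \<and> card S < Suc d} = insert {} {S. S \<subseteq> C \<and> 0 < card S \<and> card S < Suc d}"
    using C by (auto intro: rev_finite_subset simp: card_gt_0_iff)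
  moreover have "finite {S. S \<subseteq> C \<and> 0 < card S \<and> card S < Suc d}" using C by simp
  ultimately show ?thesis unfolding esym_prod_def by simp
qed

lemma Psi_eq_const_esym_prod: "finite C \<Longrightarrow> Psi x d C = Psi_const d (card C) * esym_prod x d C"
proof (induction d arbitrary: C)
  case 0
  then show ?case unfolding esym_prod_def by simp
next
  case (Suc d)
  have "(\<Prod>a\<in>C. Psi x d (C - {a})) = (\<Prod>a\<in>C. Psi_const d (card C - 1) * esym_prod x d (C - {a}))"
    using Suc by (intro prod.cong) simp_all
  also have "\<dots> = Psi_const d (card C - 1) ^ card C * (\<Prod>a\<in>C. esym_prod x d (C - {a}))"
    by (simp add: prod.distrib)
  finally show ?case using esym_prod_Suc[OF Suc.prems, of x d] by (simp add: algebra_simps)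
qed

lemma esym_prod_eq_partials:
  assumes "finite A" "1 \<le> k"
  shows "esym_prod x k A = (\<Prod>S | S \<subseteq> A \<and> card S \<le> k - 1.
           partials S (\<lambda>y. esym y k A) x ^ (fact (card S) * (card A - card S - 1)))"
  unfolding esym_prod_def
proof (rule prod.cong)
  show "{S. S \<subseteq> A \<and> card S < k} = {S. S \<subseteq> A \<and> card S \<le> k - 1}" using assms(2) by auto
next
  fix S assume "S \<in> {S. S \<subseteq> A \<and> card S \<le> k - 1}"
  then have "S \<subseteq> A" "card S \<le> k" by auto
  then show "esym x (k - card S) (A - S) ^ (fact (card S) * (card A - card S - 1)) =
      partials S (\<lambda>y. esym y k A) x ^ (fact (card S) * (card A - card S - 1))"
    using partials_esym[OF assms(1), of S k x] by simp
qed

section \<open>The graph G_{n,k}\<close>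

definition node :: "nat list \<Rightarrow> vtx" where
  "node u = (if u = [] then Sv else W u)"

definition extensions :: "nat \<Rightarrow> nat \<Rightarrow> nat list \<Rightarrow> nat list set" where
  "extensions n k u = {v \<in> words n k. \<exists>a t. v = u @ a # t}"

definition sub_verts :: "nat \<Rightarrow> nat \<Rightarrow> nat list \<Rightarrow> vtx set" where
  "sub_verts n k u = {node u, Zv} \<union> W ` extensions n k u"

definition sub_edges :: "nat \<Rightarrow> nat \<Rightarrow> nat list \<Rightarrow> (vtx \<times> vtx) set" where
  "sub_edges n k u = Gedges n k \<inter> (sub_verts n k u \<times> sub_verts n k u)"

definition valid_prefix :: "nat \<Rightarrow> nat \<Rightarrow> nat list \<Rightarrow> bool" where
  "valid_prefix n k u \<longleftrightarrow> distinct u \<and> set u \<subseteq> {1..n} \<and> length u \<le> k"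

lemma finite_words: "finite (words n k)"
proof -
  have "words n k \<subseteq> {w. set w \<subseteq> {1..n} \<and> length w \<le> k}" unfolding words_def by auto
  then show ?thesis using finite_lists_length_le[of "{1..n}" k] finite_subset by blast
qed

lemma finite_sub_verts: "finite (sub_verts n k u)"
proof -
  have "extensions n k u \<subseteq> words n k" unfolding extensions_def by auto
  then have "finite (extensions n k u)" using finite_words finite_subset by blast
  then show ?thesis unfolding sub_verts_def by auto
qed

lemma sub_edges_subset: "sub_edges n k u \<subseteq> sub_verts n k u \<times> sub_verts n k u" unfolding sub_edges_def by auto

lemma Zv_in_sub_verts: "Zv \<in> sub_verts n k u" unfolding sub_verts_def by auto
lemma node_neq_Zv: "node u \<noteq> Zv" unfolding node_def by auto
lemma Sv_in_sub_verts_iff: "Sv \<in> sub_verts n k u \<longleftrightarrow> u = []" unfolding sub_verts_def node_def by auto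
lemma W_in_sub_verts_iff: "W v \<in> sub_verts n k u \<longleftrightarrow> (u \<noteq> [] \<and> v = u) \<or> v \<in> extensions n k u"
  unfolding sub_verts_def node_def by auto

locale gnk =
  fixes n k :: nat
  assumes k_ge_1: "1 \<le> k" and k_less_n: "k < n"
begin

abbreviation unused :: "nat list \<Rightarrow> nat set" where "unused u \<equiv> {1..n} - set u"

lemma snoc_in_words:
  assumes "valid_prefix n k u" "length u < k" "a \<in> unused u"
  shows "u @ [a] \<in> words n k" "valid_prefix n k (u @ [a])"
  using assms unfolding valid_prefix_def words_def by auto

lemma W_in_sub_verts_snoc_iff:
  assumes "valid_prefix n k u" "length u < k" "a \<in> unused u"
  shows "W v \<in> sub_verts n k (u @ [a]) \<longleftrightarrow> v \<in> words n k \<and> (\<exists>t. v = u @ a # t)"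
proof
  assume "W v \<in> sub_verts n k (u @ [a])"
  then have "v = u @ [a] \<or> v \<in> extensions n k (u @ [a])" using W_in_sub_verts_iff by auto
  then show "v \<in> words n k \<and> (\<exists>t. v = u @ a # t)"
    using snoc_in_words[OF assms] unfolding extensions_def by auto
next
  assume h: "v \<in> words n k \<and> (\<exists>t. v = u @ a # t)"
  then obtain t where t: "v = u @ a # t" by auto
  show "W v \<in> sub_verts n k (u @ [a])"
  proof (cases t)
    case Nil then show ?thesis using t W_in_sub_verts_iff by auto
  next
    case (Cons b t')
    then have "v \<in> extensions n k (u @ [a])" using h t unfolding extensions_def by auto
    then show ?thesis using W_in_sub_verts_iff by auto
  qed
qed

lemma extensions_iff:
  assumes "valid_prefix n k u"
  shows "v \<in> extensions n k u \<longleftrightarrow> (\<exists>a\<in>unused u. v \<in> words n k \<and> (\<exists>t. v = u @ a # t))"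
proof
  assume "v \<in> extensions n k u"
  then obtain a t where h: "v \<in> words n k" "v = u @ a # t" unfolding extensions_def by auto
  then have "a \<in> unused u" unfolding words_def by auto
  then show "\<exists>a\<in>unused u. v \<in> words n k \<and> (\<exists>t. v = u @ a # t)" using h by blast
next
  assume "\<exists>a\<in>unused u. v \<in> words n k \<and> (\<exists>t. v = u @ a # t)"
  then show "v \<in> extensions n k u" unfolding extensions_def by auto
qed

lemma Sv_notin_sub_verts_snoc: "Sv \<notin> sub_verts n k (u @ [a])" using Sv_in_sub_verts_iff by auto

definition branch_verts :: "nat list \<Rightarrow> nat \<Rightarrow> vtx set" where
  "branch_verts u a = insert (node u) (sub_verts n k (u @ [a]))"

definition branch_edges :: "nat list \<Rightarrow> nat \<Rightarrow> (vtx \<times> vtx) set" where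
  "branch_edges u a = insert (node u, W (u @ [a])) (sub_edges n k (u @ [a]))"

lemma node_notin_sub_verts_snoc:
  assumes "valid_prefix n k u" "length u < k" "a \<in> unused u"
  shows "node u \<notin> sub_verts n k (u @ [a])"
proof (cases "u = []")
  case True then show ?thesis using Sv_in_sub_verts_iff unfolding node_def by auto
next
  case False
  then have "node u = W u" unfolding node_def by auto
  moreover have "W u \<notin> sub_verts n k (u @ [a])" using W_in_sub_verts_snoc_iff[OF assms, of u] by auto
  ultimately show ?thesis by auto
qed

lemma sub_verts_decomp:
  assumes "valid_prefix n k u" "length u < k"
  shows "sub_verts n k u = {node u, Zv} \<union> \<Union>(branch_verts u ` unused u)"
proof (rule set_eqI)
  fix x
  show "x \<in> sub_verts n k u \<longleftrightarrow> x \<in> {node u, Zv} \<union> \<Union>(branch_verts u ` unused u)"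
  proof (cases x)
    case Sv
    then show ?thesis using Sv_in_sub_verts_iff[of n k u] Sv_notin_sub_verts_snoc unfolding branch_verts_def node_def by auto
  next
    case Zv
    then show ?thesis using Zv_in_sub_verts by auto
  next
    case (W v)
    have "W v \<in> sub_verts n k u \<longleftrightarrow> W v = node u \<or> (\<exists>a\<in>unused u. W v \<in> sub_verts n k (u @ [a]))"
      using W_in_sub_verts_iff[of v n k u] extensions_iff[OF assms(1), of v] W_in_sub_verts_snoc_iff[OF assms] unfolding node_def by auto
    then show ?thesis using W unfolding branch_verts_def by auto
  qed
qed

lemma branch_verts_Int:
  assumes "valid_prefix n k u" "length u < k" "a \<in> unused u" "b \<in> unused u" "a \<noteq> b"
  shows "branch_verts u a \<inter> branch_verts u b = {node u, Zv}"
proof (rule set_eqI)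
  fix x
  show "x \<in> branch_verts u a \<inter> branch_verts u b \<longleftrightarrow> x \<in> {node u, Zv}"
  proof (cases x)
    case Sv then show ?thesis using Sv_notin_sub_verts_snoc unfolding branch_verts_def by auto
  next
    case Zv then show ?thesis using Zv_in_sub_verts unfolding branch_verts_def by auto
  next
    case (W v)
    have "\<not> (W v \<in> sub_verts n k (u @ [a]) \<and> W v \<in> sub_verts n k (u @ [b]))"
      using W_in_sub_verts_snoc_iff[OF assms(1,2,3), of v] W_in_sub_verts_snoc_iff[OF assms(1,2,4), of v] assms(5) by auto
    then show ?thesis using W unfolding branch_verts_def by auto
  qed
qed

lemma node_snoc_in_Gedges:
  assumes "valid_prefix n k u" "length u < k" "a \<in> unused u"
  shows "(node u, W (u @ [a])) \<in> Gedges n k"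
proof (cases "u = []")
  case True then show ?thesis using assms unfolding Gedges_def node_def by auto
next
  case False then show ?thesis using snoc_in_words[OF assms] unfolding Gedges_def node_def by auto
qed

lemma branch_edges_subset_Gedges: assumes "valid_prefix n k u" "length u < k" "a \<in> unused u" shows "branch_edges u a \<subseteq> Gedges n k"
  using node_snoc_in_Gedges[OF assms] unfolding branch_edges_def sub_edges_def by auto

lemma branch_edges_subset: assumes "valid_prefix n k u" "length u < k" "a \<in> unused u" shows "branch_edges u a \<subseteq> branch_verts u a \<times> branch_verts u a"
  using W_in_sub_verts_snoc_iff[OF assms, of "u @ [a]"] snoc_in_words[OF assms] sub_edges_subset[of n k "u @ [a]"] unfolding branch_edges_def branch_verts_def by auto

lemma no_Gedge_node_Zv:
  assumes "valid_prefix n k u" "length u < k" "(x,y) \<in> Gedges n k" "x \<in> {node u, Zv}" "y \<in> {node u, Zv}"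
  shows False
  using assms unfolding Gedges_def node_def by (auto split: if_splits)

lemma branch_edges_disjoint:
  assumes "valid_prefix n k u" "length u < k" "a \<in> unused u" "b \<in> unused u" "a \<noteq> b"
  shows "branch_edges u a \<inter> branch_edges u b = {}"
proof (rule ccontr)
  assume "branch_edges u a \<inter> branch_edges u b \<noteq> {}"
  then obtain x y where e: "(x,y) \<in> branch_edges u a" "(x,y) \<in> branch_edges u b" by auto
  then have "x \<in> branch_verts u a \<inter> branch_verts u b" "y \<in> branch_verts u a \<inter> branch_verts u b"
    using branch_edges_subset[OF assms(1,2,3)] branch_edges_subset[OF assms(1,2,4)] by auto
  then have "x \<in> {node u, Zv}" "y \<in> {node u, Zv}" using branch_verts_Int[OF assms] by auto
  moreover have "(x,y) \<in> Gedges n k" using e branch_edges_subset_Gedges[OF assms(1,2,3)] by auto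
  ultimately show False using no_Gedge_node_Zv[OF assms(1,2)] by blast
qed

lemma extension_in_branch:
  assumes "valid_prefix n k u" "length u < k" "w \<in> extensions n k u"
  obtains b where "b \<in> unused u" "W w \<in> sub_verts n k (u @ [b])"
    "\<And>a. w @ [a] \<in> words n k \<Longrightarrow> W (w @ [a]) \<in> sub_verts n k (u @ [b])"
proof -
  obtain b t where b: "b \<in> unused u" "w \<in> words n k" "w = u @ b # t"
    using extensions_iff[OF assms(1)] assms(3) by blast
  then show ?thesis using that W_in_sub_verts_snoc_iff[OF assms(1,2) b(1)] by auto
qed

lemma sub_edge_in_branch:
  assumes "valid_prefix n k u" "length u < k" "(x, y) \<in> sub_edges n k u"
  shows "\<exists>b\<in>unused u. (x, y) \<in> branch_edges u b"
proof -
  have G: "(x, y) \<in> Gedges n k" and xV: "x \<in> sub_verts n k u"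
    using assms(3) unfolding sub_edges_def by auto
  have in_branch: "(x, y) \<in> branch_edges u b"
    if "x \<in> sub_verts n k (u @ [b])" "y \<in> sub_verts n k (u @ [b])" for b
    using that G unfolding branch_edges_def sub_edges_def by auto
  from G have "(x = Sv \<and> (\<exists>i\<in>{1..n}. y = W [i])) \<or>
      (\<exists>w a. w \<noteq> [] \<and> w @ [a] \<in> words n k \<and> x = W w \<and> y = W (w @ [a])) \<or>
      (\<exists>w. w \<in> words n k \<and> length w = k \<and> x = W w \<and> y = Zv)"
    unfolding Gedges_def by auto
  then show ?thesis
  proof (elim disjE exE conjE bexE)
    fix i assume h: "x = Sv" "i \<in> {1..n}" "y = W [i]"
    then have "u = []" using xV Sv_in_sub_verts_iff by auto
    then show ?thesis using h unfolding branch_edges_def node_def by auto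
  next
    fix w a assume h: "w \<noteq> []" "w @ [a] \<in> words n k" "x = W w" "y = W (w @ [a])"
    have "(u \<noteq> [] \<and> w = u) \<or> w \<in> extensions n k u" using xV h(3) W_in_sub_verts_iff by auto
    then show ?thesis
    proof
      assume "u \<noteq> [] \<and> w = u"
      then have "a \<in> unused u" "x = node u" "y = W (u @ [a])" using h unfolding words_def node_def by auto
      then show ?thesis unfolding branch_edges_def by auto
    next
      assume "w \<in> extensions n k u"
      then show ?thesis using extension_in_branch[OF assms(1,2)] in_branch h by metis
    qed
  next
    fix w assume h: "w \<in> words n k" "length w = k" "x = W w" "y = Zv"
    then have "w \<in> extensions n k u" using xV assms(2) W_in_sub_verts_iff by auto
    then show ?thesis using extension_in_branch[OF assms(1,2)] in_branch h Zv_in_sub_verts by metis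
  qed
qed

lemma sub_edges_decomp:
  assumes "valid_prefix n k u" "length u < k"
  shows "sub_edges n k u = \<Union>(branch_edges u ` unused u)"
proof
  show "\<Union>(branch_edges u ` unused u) \<subseteq> sub_edges n k u"
  proof
    fix e assume "e \<in> \<Union>(branch_edges u ` unused u)"
    then obtain a where a: "a \<in> unused u" "e \<in> branch_edges u a" by auto
    have "e \<in> Gedges n k" using a branch_edges_subset_Gedges[OF assms a(1)] by auto
    moreover have "e \<in> branch_verts u a \<times> branch_verts u a" using a branch_edges_subset[OF assms a(1)] by auto
    moreover have "branch_verts u a \<subseteq> sub_verts n k u" using sub_verts_decomp[OF assms] a(1) by auto
    ultimately show "e \<in> sub_edges n k u" unfolding sub_edges_def by auto
  qed
  show "sub_edges n k u \<subseteq> \<Union>(branch_edges u ` unused u)"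
    using sub_edge_in_branch[OF assms] by auto
qed

lemma sub_graph_full:
  assumes "valid_prefix n k u" "length u = k"
  shows "sub_verts n k u = {W u, Zv}" "sub_edges n k u = {(W u, Zv)}" "node u = W u"
proof -
  have ne: "u \<noteq> []" using assms k_ge_1 by auto
  then show nu: "node u = W u" unfolding node_def by auto
  have "extensions n k u = {}" using assms unfolding extensions_def words_def by auto
  then show V: "sub_verts n k u = {W u, Zv}" unfolding sub_verts_def nu by auto
  have uw: "u \<in> words n k" using assms k_ge_1 unfolding valid_prefix_def words_def by auto
  show "sub_edges n k u = {(W u, Zv)}"
  proof
    show "{(W u, Zv)} \<subseteq> sub_edges n k u" unfolding sub_edges_def V Gedges_def using uw assms by auto
    show "sub_edges n k u \<subseteq> {(W u, Zv)}" unfolding sub_edges_def V Gedges_def by auto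
  qed
qed

lemma Hwt_node:
  assumes "valid_prefix n k u" "length u < k"
  shows "Hwt n k k x (node u) (W (u @ [a])) = fact (k - length u) * x a"
proof (cases "u = []")
  case True then show ?thesis unfolding Hwt_def node_def by simp
next
  case False
  have "k - Suc (length u) + 1 = k - length u" using assms(2) by simp
  then show ?thesis using False unfolding Hwt_def node_def by simp
qed

lemma Hwt_to_Zv: "Hwt n k k x (W u) Zv = esym x 1 (unused u)"
  unfolding Hwt_def qsym_def by (simp add: esym_0)
lemma branch_series:
  assumes "valid_prefix n k u" "length u < k" "a \<in> unused u"
  shows "series_comp {node u, W (u @ [a])} (sub_verts n k (u @ [a]))
           {(node u, W (u @ [a]))} (sub_edges n k (u @ [a])) (node u) (W (u @ [a])) Zv"
proof
  have ua: "W (u @ [a]) \<in> sub_verts n k (u @ [a])" using W_in_sub_verts_iff by simp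
  show "{node u, W (u @ [a])} \<inter> sub_verts n k (u @ [a]) = {W (u @ [a])}"
    using node_notin_sub_verts_snoc[OF assms] ua by auto
  show "node u \<noteq> W (u @ [a])" using node_notin_sub_verts_snoc[OF assms] ua by auto
  show "{(node u, W (u @ [a]))} \<inter> sub_edges n k (u @ [a]) = {}"
    using node_notin_sub_verts_snoc[OF assms] sub_edges_subset by auto
qed (auto simp: finite_sub_verts sub_edges_subset Zv_in_sub_verts)

lemma branch_polys:
  assumes "valid_prefix n k u" "length u < k" "a \<in> unused u"
  defines "V \<equiv> sub_verts n k (u @ [a])" and "E \<equiv> sub_edges n k (u @ [a])"
  shows "tree_poly (branch_verts u a) (branch_edges u a) w = w (node u) (W (u @ [a])) * tree_poly V E w"
    and "forest_poly (branch_verts u a) (branch_edges u a) (node u) Zv w =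
           w (node u) (W (u @ [a])) * forest_poly V E (W (u @ [a])) Zv w + tree_poly V E w"
proof -
  interpret series_comp "{node u, W (u @ [a])}" V "{(node u, W (u @ [a]))}" E "node u" "W (u @ [a])" Zv
    unfolding V_def E_def by (rule branch_series[OF assms(1-3)])
  have "branch_verts u a = {node u, W (u @ [a])} \<union> V" "branch_edges u a = {(node u, W (u @ [a]))} \<union> E"
    using W_in_sub_verts_iff unfolding branch_verts_def branch_edges_def V_def E_def by auto
  then show "tree_poly (branch_verts u a) (branch_edges u a) w = w (node u) (W (u @ [a])) * tree_poly V E w"
    and "forest_poly (branch_verts u a) (branch_edges u a) (node u) Zv w =
           w (node u) (W (u @ [a])) * forest_poly V E (W (u @ [a])) Zv w + tree_poly V E w"
    using tree_poly_Un forest_poly_Un tree_poly_edge[OF a_neq_m] forest_poly_edge[OF a_neq_m] by simp_all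
qed

lemma sub_polys_parallel:
  assumes "valid_prefix n k u" "length u < k"
  shows "tree_poly (sub_verts n k u) (sub_edges n k u) w = (\<Sum>a\<in>unused u.
           tree_poly (branch_verts u a) (branch_edges u a) w *
           (\<Prod>b\<in>unused u - {a}. forest_poly (branch_verts u b) (branch_edges u b) (node u) Zv w))"
    and "forest_poly (sub_verts n k u) (sub_edges n k u) (node u) Zv w =
           (\<Prod>a\<in>unused u. forest_poly (branch_verts u a) (branch_edges u a) (node u) Zv w)"
proof -
  have branch: "finite (branch_verts u a) \<and> branch_edges u a \<subseteq> branch_verts u a \<times> branch_verts u a \<and>
      node u \<in> branch_verts u a \<and> Zv \<in> branch_verts u a" if "a \<in> unused u" for a
    using branch_edges_subset[OF assms that] finite_sub_verts Zv_in_sub_verts unfolding branch_verts_def by auto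
  have disj: "branch_verts u a \<inter> branch_verts u b = {node u, Zv} \<and> branch_edges u a \<inter> branch_edges u b = {}"
    if "a \<in> unused u" "b \<in> unused u" "a \<noteq> b" for a b
    using branch_verts_Int[OF assms that] branch_edges_disjoint[OF assms that] by blast
  show "tree_poly (sub_verts n k u) (sub_edges n k u) w = (\<Sum>a\<in>unused u.
           tree_poly (branch_verts u a) (branch_edges u a) w *
           (\<Prod>b\<in>unused u - {a}. forest_poly (branch_verts u b) (branch_edges u b) (node u) Zv w))"
    unfolding sub_verts_decomp[OF assms] sub_edges_decomp[OF assms]
    by (rule tree_poly_parallel[OF _ node_neq_Zv branch disj]) simp_all
  show "forest_poly (sub_verts n k u) (sub_edges n k u) (node u) Zv w =
           (\<Prod>a\<in>unused u. forest_poly (branch_verts u a) (branch_edges u a) (node u) Zv w)"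
    unfolding sub_verts_decomp[OF assms] sub_edges_decomp[OF assms]
    by (rule forest_poly_parallel[OF _ node_neq_Zv branch disj]) simp_all
qed

lemma branch_Hwt_polys:
  assumes u: "valid_prefix n k u" and d: "k - length u = Suc m" and a: "a \<in> unused u"
    and child_tree: "tree_poly (sub_verts n k (u @ [a])) (sub_edges n k (u @ [a])) (Hwt n k k x) =
      fact (Suc m) * esym x (Suc m) (unused u - {a}) * Psi x m (unused u - {a})"
    and child_forest: "forest_poly (sub_verts n k (u @ [a])) (sub_edges n k (u @ [a])) (W (u @ [a])) Zv
      (Hwt n k k x) = esym x m (unused u - {a}) * Psi x m (unused u - {a})"
  shows "tree_poly (branch_verts u a) (branch_edges u a) (Hwt n k k x) =
      fact (Suc m) * fact (Suc m) * (x a * esym x (Suc m) (unused u - {a})) * Psi x m (unused u - {a})"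
    and "forest_poly (branch_verts u a) (branch_edges u a) (node u) Zv (Hwt n k k x) =
      fact (Suc m) * esym x (Suc m) (unused u) * Psi x m (unused u - {a})"
proof -
  have len: "length u < k" using d by simp
  have "Hwt n k k x (node u) (W (u @ [a])) = fact (Suc m) * x a" using Hwt_node[OF u len] d by simp
  moreover have "esym x (Suc m) (unused u) = x a * esym x m (unused u - {a}) + esym x (Suc m) (unused u - {a})"
    using esym_Suc_remove[OF _ a] by simp
  ultimately show "tree_poly (branch_verts u a) (branch_edges u a) (Hwt n k k x) =
      fact (Suc m) * fact (Suc m) * (x a * esym x (Suc m) (unused u - {a})) * Psi x m (unused u - {a})"
    and "forest_poly (branch_verts u a) (branch_edges u a) (node u) Zv (Hwt n k k x) =
      fact (Suc m) * esym x (Suc m) (unused u) * Psi x m (unused u - {a})"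
    using branch_polys[OF u len a] child_tree child_forest by (simp_all add: algebra_simps)
qed

lemma sub_polys_step:
  assumes u: "valid_prefix n k u" and d: "k - length u = Suc m"
    and branch_tree: "\<And>a. a \<in> unused u \<Longrightarrow> tree_poly (branch_verts u a) (branch_edges u a) (Hwt n k k x) =
      fact (Suc m) * fact (Suc m) * (x a * esym x (Suc m) (unused u - {a})) * Psi x m (unused u - {a})"
    and branch_forest: "\<And>a. a \<in> unused u \<Longrightarrow>
      forest_poly (branch_verts u a) (branch_edges u a) (node u) Zv (Hwt n k k x) =
      fact (Suc m) * esym x (Suc m) (unused u) * Psi x m (unused u - {a})"
  shows "tree_poly (sub_verts n k u) (sub_edges n k u) (Hwt n k k x) =
           fact (Suc (Suc m)) * esym x (Suc (Suc m)) (unused u) * Psi x (Suc m) (unused u)"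
    and "forest_poly (sub_verts n k u) (sub_edges n k u) (node u) Zv (Hwt n k k x) =
           esym x (Suc m) (unused u) * Psi x (Suc m) (unused u)"
proof -
  define f :: real where "f = fact (Suc m)"
  define C where "C = unused u"
  define E where "E = esym x (Suc m) C"
  define P where "P = (\<Prod>a\<in>C. Psi x m (C - {a}))"
  have len: "length u < k" using d by simp
  have fin: "finite C" unfolding C_def by simp
  have "card C = n - length u"
    using u unfolding C_def valid_prefix_def by (simp add: card_Diff_subset distinct_card)
  then obtain N where N: "card C = Suc N" using len k_less_n Suc_diff_Suc by (metis less_trans)
  have Psi_Suc: "Psi x (Suc m) C = f ^ Suc N * E ^ N * P" unfolding f_def E_def P_def using N by simp
  have "forest_poly (sub_verts n k u) (sub_edges n k u) (node u) Zv (Hwt n k k x) =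
      (\<Prod>a\<in>C. f * E * Psi x m (C - {a}))"
    using sub_polys_parallel(2)[OF u len] branch_forest unfolding C_def E_def f_def by simp
  also have "\<dots> = E * Psi x (Suc m) C"
    unfolding Psi_Suc P_def by (simp add: prod.distrib N power_mult_distrib)
  finally show "forest_poly (sub_verts n k u) (sub_edges n k u) (node u) Zv (Hwt n k k x) =
      esym x (Suc m) (unused u) * Psi x (Suc m) (unused u)"
    unfolding C_def E_def .
  have "tree_poly (sub_verts n k u) (sub_edges n k u) (Hwt n k k x) = (\<Sum>a\<in>C.
      f * f * (x a * esym x (Suc m) (C - {a})) * Psi x m (C - {a}) * (\<Prod>b\<in>C - {a}. f * E * Psi x m (C - {b})))"
    using sub_polys_parallel(1)[OF u len] branch_tree branch_forest unfolding C_def E_def f_def by simp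
  also have "\<dots> = (f * E) ^ N * P * (f * f * (\<Sum>a\<in>C. x a * esym x (Suc m) (C - {a})))"
    unfolding sum_mult_prod_remove[OF fin] N P_def by (simp add: sum_distrib_left)
  also have "\<dots> = fact (Suc (Suc m)) * esym x (Suc (Suc m)) C * Psi x (Suc m) C"
  proof -
    have "(fact (Suc (Suc m)) :: real) = of_nat (Suc (Suc m)) * f" unfolding f_def by (rule fact_Suc)
    then show ?thesis unfolding sum_mult_esym_remove[OF fin] Psi_Suc by (simp add: power_mult_distrib mult_ac)
  qed
  finally show "tree_poly (sub_verts n k u) (sub_edges n k u) (Hwt n k k x) =
      fact (Suc (Suc m)) * esym x (Suc (Suc m)) (unused u) * Psi x (Suc m) (unused u)"
    unfolding C_def .
qed

lemma sub_polys:
  assumes "valid_prefix n k u"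
  shows "tree_poly (sub_verts n k u) (sub_edges n k u) (Hwt n k k x) =
           fact (Suc (k - length u)) * esym x (Suc (k - length u)) (unused u) * Psi x (k - length u) (unused u) \<and>
         forest_poly (sub_verts n k u) (sub_edges n k u) (node u) Zv (Hwt n k k x) =
           esym x (k - length u) (unused u) * Psi x (k - length u) (unused u)"
  using assms
proof (induction "k - length u" arbitrary: u)
  case 0
  then have "length u = k" unfolding valid_prefix_def by simp
  moreover have "W u \<noteq> Zv" by simp
  ultimately show ?case
    using sub_graph_full[OF 0(2)] 0(1)[symmetric] Hwt_to_Zv
      tree_poly_edge[of "W u" Zv "Hwt n k k x"] forest_poly_edge[of "W u" Zv "Hwt n k k x"]
    by (simp add: esym_0)
next
  case (Suc m u)
  have d: "k - length u = Suc m" using Suc.hyps(2) by simp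
  have child: "tree_poly (sub_verts n k (u @ [a])) (sub_edges n k (u @ [a])) (Hwt n k k x) =
        fact (Suc m) * esym x (Suc m) (unused u - {a}) * Psi x m (unused u - {a}) \<and>
      forest_poly (sub_verts n k (u @ [a])) (sub_edges n k (u @ [a])) (W (u @ [a])) Zv (Hwt n k k x) =
        esym x m (unused u - {a}) * Psi x m (unused u - {a})" if a: "a \<in> unused u" for a
  proof -
    have "valid_prefix n k (u @ [a])" using snoc_in_words[OF Suc.prems _ a] d by simp
    moreover have "m = k - length (u @ [a])" using d by simp
    moreover have "unused (u @ [a]) = unused u - {a}" by auto
    ultimately show ?thesis using Suc.hyps(1)[of "u @ [a]"] unfolding node_def by simp
  qed
  show ?case
    using sub_polys_step[OF Suc.prems d] branch_Hwt_polys[OF Suc.prems d] child unfolding d by simp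
qed

lemma Gverts_eq: "Gverts n k = sub_verts n k []"
proof -
  have "extensions n k [] = words n k" unfolding extensions_def words_def by (auto simp: Suc_le_length_iff)
  then show ?thesis unfolding Gverts_def sub_verts_def node_def by auto
qed

lemma Gedges_eq: "Gedges n k = sub_edges n k []"
proof -
  have "Gedges n k \<subseteq> Gverts n k \<times> Gverts n k"
  proof
    fix e assume "e \<in> Gedges n k"
    then show "e \<in> Gverts n k \<times> Gverts n k"
    proof (unfold Gedges_def, elim UnE CollectE exE conjE)
      fix i assume "e = (Sv, W [i])" "i \<in> {1..n}"
      moreover have "[i] \<in> words n k" using calculation k_ge_1 unfolding words_def by auto
      ultimately show ?thesis unfolding Gverts_def by auto
    next
      fix w a assume h: "e = (W w, W (w @ [a]))" "w \<noteq> []" "w @ [a] \<in> words n k"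
      have "w \<in> words n k" using h unfolding words_def by (auto simp: neq_Nil_conv)
      then show ?thesis using h unfolding Gverts_def by auto
    next
      fix w assume "e = (W w, Zv)" "w \<in> words n k"
      then show ?thesis unfolding Gverts_def by auto
    qed
  qed
  then show ?thesis unfolding sub_edges_def Gverts_eq[symmetric] by auto
qed

lemma H_eq: "H n k k x = fact (Suc k) * esym x (Suc k) {1..n} * Psi x k {1..n}"
proof -
  have "valid_prefix n k []" unfolding valid_prefix_def by simp
  then show ?thesis using sub_polys[of "[]" x] unfolding H_def Gverts_eq Gedges_eq by simp
qed

end

theorem lemma2:
  fixes n k :: nat
  assumes "1 \<le> k" and "k \<le> n - 1"
  shows "\<exists>C::real. C > 0 \<and> (\<forall>x :: nat \<Rightarrow> real.
           H n k k x = C * esym x (k + 1) {1..n} *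
             (\<Prod>S\<in>{S. S \<subseteq> {1..n} \<and> card S \<le> k - 1}.
                (partials S (\<lambda>y. esym y k {1..n}) x) ^ (fact (card S) * (n - card S - 1))))"
proof (intro exI conjI allI)
  interpret gnk n k using assms by unfold_locales auto
  fix x :: "nat \<Rightarrow> real"
  show "H n k k x = fact (Suc k) * Psi_const k n * esym x (k + 1) {1..n} *
             (\<Prod>S\<in>{S. S \<subseteq> {1..n} \<and> card S \<le> k - 1}.
                (partials S (\<lambda>y. esym y k {1..n}) x) ^ (fact (card S) * (n - card S - 1)))"
    using H_eq Psi_eq_const_esym_prod[of "{1..n}" x k] esym_prod_eq_partials[of "{1..n}" k x] assms(1)
    by simp
qed (simp add: Psi_const_pos)

end
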